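(* In the setting below, with $\mathcal{S}=\{j_1<\dots<j_s\}$ and $A=(\mathrm{Id}-B_{j_s})\cdots(\mathrm{Id}-B_{j_1})$, we have $\|A\|_2<1$.
   Context: Setting: $f:\mathbb{R}^p\to\mathbb{R}$ convex, differentiable with Lipschitz gradient; $g_j:\mathbb{R}\to\mathbb{R}\cup\{+\infty\}$ proper closed convex; $x^\star$ a minimizer of $f(x)+\sum_jg_j(x_j)$; $\mathcal{S}=\{j:\partial g_j(x^\star_j)\text{ is a singleton}\}$; $g_j$ is $\mathcal{C}^2$ near $x^\star_j$ for $j\in\mathcal{S}$, $f$ is $\mathcal{C}^2$ near $x^\star$, and $\nabla^2_{\mathcal{S},\mathcal{S}}f(x^\star)\succ0$. Step sizes $0<\gamma_j\le1/L_j$, $L_j$ the coordinatewise Lipschitz constant of $\nabla_jf$. For $j\in\mathcal{S}$, $z^\star_j=x^\star_j-\gamma_j\nabla_jf(x^\star)$, $p_j>0$ the derivative of $\operatorname{prox}_{\gamma_jg_j}$ at $z^\star_j$, $u_j=\frac1{\gamma_jp_j}-\frac1{\gamma_j}$, $M=\nabla^2_{\mathcal{S},\mathcal{S}}f(x^\star)+\operatorname{diag}(u)$ (symmetric positive definite), $M^{1/2}$ its symmetric square root, and $B_j=\gamma_jp_j\,M^{1/2}_{:,j}(M^{1/2}_{:,j})^\top\in\mathbb{R}^{s\times s}$. $\|\cdot\|_2$ is the spectral norm. *)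

theory Defs
  imports "HOL-Analysis.Analysis" "Jordan_Normal_Form.Matrix"
begin

text \<open>Functions g : R -> R \<union> {+inf} are modelled as real => ereal.\<close>

definition proper_fun :: "(real \<Rightarrow> ereal) \<Rightarrow> bool" where
  "proper_fun g \<longleftrightarrow> (\<forall>x. g x \<noteq> -\<infinity>) \<and> (\<exists>x. g x \<noteq> \<infinity>)"

text \<open>closed = lower semicontinuous = closed epigraph\<close>
definition closed_fun :: "(real \<Rightarrow> ereal) \<Rightarrow> bool" where
  "closed_fun g \<longleftrightarrow> closed {(x, y::real). g x \<le> ereal y}"

definition convex_fun :: "(real \<Rightarrow> ereal) \<Rightarrow> bool" where
  "convex_fun g \<longleftrightarrow> (\<forall>x y t. 0 \<le> t \<and> t \<le> 1 \<longrightarrow>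
      g ((1 - t) * x + t * y) \<le> ereal (1 - t) * g x + ereal t * g y)"

definition subdiff :: "(real \<Rightarrow> ereal) \<Rightarrow> real \<Rightarrow> real set" where
  "subdiff g x = {v. \<forall>y. g x + ereal (v * (y - x)) \<le> g y}"

definition prox :: "real \<Rightarrow> (real \<Rightarrow> ereal) \<Rightarrow> real \<Rightarrow> real" where
  "prox \<gamma> g z = (THE x. \<forall>y. g x + ereal ((x - z)^2 / (2 * \<gamma>)) \<le> g y + ereal ((y - z)^2 / (2 * \<gamma>)))"

definition C2_near :: "(real \<Rightarrow> ereal) \<Rightarrow> real \<Rightarrow> bool" where
  "C2_near g x \<longleftrightarrow> (\<exists>e>0. \<exists>h h' h''. continuous_on (ball x e) h'' \<and>
      (\<forall>y\<in>ball x e. g y = ereal (h y) \<and> (h has_real_derivative h' y) (at y)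
                      \<and> (h' has_real_derivative h'' y) (at y)))"

definition coord_lip :: "(real^'n \<Rightarrow> real^'n) \<Rightarrow> 'n \<Rightarrow> real" where
  "coord_lip G j = Inf {L. 0 \<le> L \<and>
      (\<forall>x t. \<bar>G (x + t *\<^sub>R axis j 1) $ j - G x $ j\<bar> \<le> L * \<bar>t\<bar>)}"

definition psd_mat :: "real mat \<Rightarrow> bool" where
  "psd_mat R \<longleftrightarrow> (\<forall>v \<in> carrier_vec (dim_col R). 0 \<le> v \<bullet> (R *\<^sub>v v))"

definition sym_sqrt :: "nat \<Rightarrow> real mat \<Rightarrow> real mat" where
  "sym_sqrt n M = (THE R. R \<in> carrier_mat n n \<and> transpose_mat R = R \<and> psd_mat R \<and> R * R = M)"

definition spec_norm :: "real mat \<Rightarrow> real" where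
  "spec_norm A = Sup {sqrt ((A *\<^sub>v v) \<bullet> (A *\<^sub>v v)) | v. v \<in> carrier_vec (dim_col A) \<and> v \<bullet> v \<le> 1}"

end

theory Submission
  imports Defs "Jordan_Normal_Form.Char_Poly"
begin

(* By first-order optimality z*_j = x*_j + gamma_j g_j'(x*_j), and near x*_j the proximal map
   of gamma_j g_j inverts y |-> y + gamma_j g_j'(y); hence p_j = 1 / (1 + gamma_j g_j''(x*_j))
   lies in (0, 1], so u_j >= 0 and M is positive definite.  With r_a the a-th column of M^(1/2)
   and c_a = gamma_j p_j (j = j_a), each factor is Id - B_a = Id - c_a r_a r_a^T, and
     |(Id - B_a) x|^2 = |x|^2 - c_a (2 - c_a |r_a|^2) (r_a . x)^2,
   where c_a |r_a|^2 = c_a M_aa = 1 - p_j (1 - gamma_j (D^2 f)_jj) <= 1 because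
   gamma_j (D^2 f)_jj <= gamma_j L_j <= 1.  So every factor is non-expansive, and A preserves
   the norm of x only if x is orthogonal to every r_a, i.e. M^(1/2) x = 0, i.e. x = 0.
   A linear map of a finite-dimensional space that shrinks every nonzero vector has operator
   norm < 1. *)

lemma convex_fun_convex_on_finite_domain:
  fixes G :: "real \<Rightarrow> ereal"
  assumes conv: "convex_fun G" and not_minf: "\<And>y. G y \<noteq> -\<infinity>"
  shows "convex_on {y. G y \<noteq> \<infinity>} (\<lambda>y. real_of_ereal (G y))"
proof -
  have bound: "G ((1 - t) * x + t * y) \<le> ereal ((1 - t) * real_of_ereal (G x) + t * real_of_ereal (G y))"
    if t: "0 \<le> t" "t \<le> 1" and xy: "G x \<noteq> \<infinity>" "G y \<noteq> \<infinity>" for t x y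
  proof -
    obtain a b where ab: "G x = ereal a" "G y = ereal b"
      using xy not_minf[of x] not_minf[of y] by (cases "G x"; cases "G y") auto
    have "G ((1 - t) * x + t * y) \<le> ereal (1 - t) * G x + ereal t * G y"
      using conv t unfolding convex_fun_def by blast
    thus ?thesis using ab by simp
  qed
  have fin: "G ((1 - t) * x + t * y) \<noteq> \<infinity>" if "0 \<le> t" "t \<le> 1" "G x \<noteq> \<infinity>" "G y \<noteq> \<infinity>" for t x y
    using bound[OF that] by auto
  show ?thesis
  proof (rule convex_onI)
    show "convex {y. G y \<noteq> \<infinity>}" unfolding convex_alt using fin by simp
    fix t x y :: real assume "0 < t" "t < 1" "x \<in> {y. G y \<noteq> \<infinity>}" "y \<in> {y. G y \<noteq> \<infinity>}"
    thus "real_of_ereal (G ((1 - t) *\<^sub>R x + t *\<^sub>R y))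
        \<le> (1 - t) * real_of_ereal (G x) + t * real_of_ereal (G y)"
      using bound[of t x y] fin[of t x y] not_minf[of "(1 - t) * x + t * y"]
      by (cases "G ((1 - t) * x + t * y)") auto
  qed
qed

lemma convex_fun_deriv_in_subdiff:
  fixes G :: "real \<Rightarrow> ereal"
  assumes conv: "convex_fun G" and not_minf: "\<And>y. G y \<noteq> -\<infinity>"
    and U: "open U" "x \<in> U" and loc: "\<And>y. y \<in> U \<Longrightarrow> G y = ereal (h y)"
    and deriv: "(h has_real_derivative d) (at x)"
  shows "d \<in> subdiff G x"
  unfolding subdiff_def
proof (intro CollectI allI)
  fix y
  define D where "D = {y. G y \<noteq> \<infinity>}"
  have cvx: "convex_on D (\<lambda>y. real_of_ereal (G y))"
    unfolding D_def by (rule convex_fun_convex_on_finite_domain[OF conv not_minf])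
  have "U \<subseteq> D" using loc by (auto simp: D_def)
  hence x: "x \<in> interior D" using U interior_maximal by blast
  show "G x + ereal (d * (y - x)) \<le> G y"
  proof (cases "y \<in> D")
    case False
    thus ?thesis by (simp add: D_def)
  next
    case True
    have "((\<lambda>y. real_of_ereal (G y)) has_real_derivative d) (at x)"
      using has_field_derivative_transform_within_open[OF deriv U] loc by simp
    hence "d * (y - x) \<le> real_of_ereal (G y) - real_of_ereal (G x)"
      using convex_on_imp_above_tangent[OF cvx convex_connected[OF convex_on_imp_convex[OF cvx]] x True]
      by (simp add: has_field_derivative_at_within)
    thus ?thesis using True not_minf[of y] loc[OF U(2)] by (cases "G y") (auto simp: D_def)
  qed
qed

lemma subdiff_mono:
  fixes G :: "real \<Rightarrow> ereal"
  assumes v: "v \<in> subdiff G x" and w: "w \<in> subdiff G y"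
    and fin: "G x = ereal a" "G y = ereal b" and xy: "x < y"
  shows "v \<le> w"
proof -
  have "G x + ereal (v * (y - x)) \<le> G y" "G y + ereal (w * (x - y)) \<le> G x"
    using v w unfolding subdiff_def by blast+
  hence "a + v * (y - x) \<le> b" "b + w * (x - y) \<le> a" using fin by simp_all
  hence "(v - w) * (y - x) \<le> 0" by (simp add: algebra_simps)
  thus ?thesis using xy by (simp add: mult_le_0_iff)
qed

lemma prox_eq_of_subdiff:
  fixes G :: "real \<Rightarrow> ereal"
  assumes \<gamma>: "0 < \<gamma>" and v: "v \<in> subdiff G x" and fin: "G x = ereal c"
  shows "prox \<gamma> G (x + \<gamma> * v) = x"
proof -
  define z where "z = x + \<gamma> * v"
  have above: "G x + ereal ((x - z)\<^sup>2 / (2 * \<gamma>)) + ereal ((y - x)\<^sup>2 / (2 * \<gamma>))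
      \<le> G y + ereal ((y - z)\<^sup>2 / (2 * \<gamma>))" for y
  proof -
    have "(x - z)\<^sup>2 / (2 * \<gamma>) + (y - x)\<^sup>2 / (2 * \<gamma>) = v * (y - x) + (y - z)\<^sup>2 / (2 * \<gamma>)"
      unfolding z_def using \<gamma> by (simp add: field_simps power2_eq_square)
    moreover have "G x + ereal (v * (y - x)) \<le> G y" using v unfolding subdiff_def by blast
    ultimately show ?thesis
      using add_right_mono[of "G x + ereal (v * (y - x))" "G y" "ereal ((y - z)\<^sup>2 / (2 * \<gamma>))"] fin
      by (simp add: add.assoc)
  qed
  have "prox \<gamma> G z = x" unfolding prox_def
  proof (rule the_equality)
    show "\<forall>y. G x + ereal ((x - z)\<^sup>2 / (2 * \<gamma>)) \<le> G y + ereal ((y - z)\<^sup>2 / (2 * \<gamma>))"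
    proof
      fix y
      have "G x + ereal ((x - z)\<^sup>2 / (2 * \<gamma>))
          \<le> G x + ereal ((x - z)\<^sup>2 / (2 * \<gamma>)) + ereal ((y - x)\<^sup>2 / (2 * \<gamma>))"
        using fin \<gamma> by simp
      thus "G x + ereal ((x - z)\<^sup>2 / (2 * \<gamma>)) \<le> G y + ereal ((y - z)\<^sup>2 / (2 * \<gamma>))"
        using above[of y] by (rule order.trans)
    qed
    fix x' assume "\<forall>y. G x' + ereal ((x' - z)\<^sup>2 / (2 * \<gamma>)) \<le> G y + ereal ((y - z)\<^sup>2 / (2 * \<gamma>))"
    hence "G x' + ereal ((x' - z)\<^sup>2 / (2 * \<gamma>)) \<le> G x + ereal ((x - z)\<^sup>2 / (2 * \<gamma>))" by blast
    with above[of x'] have "ereal ((x' - x)\<^sup>2 / (2 * \<gamma>)) \<le> 0"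
      using fin by (cases "G x'") auto
    hence "(x' - x)\<^sup>2 \<le> 0" using \<gamma> by (simp add: divide_le_0_iff)
    thus "x' = x" by simp
  qed
  thus ?thesis unfolding z_def .
qed

lemma DERIV_left_inverse:
  fixes f g :: "real \<Rightarrow> real"
  assumes d: "0 < d"
    and inv: "\<And>z. \<bar>z - x\<bar> \<le> d \<Longrightarrow> g (f z) = z"
    and cont: "\<And>z. \<bar>z - x\<bar> \<le> d \<Longrightarrow> isCont f z"
    and incr: "f (x - d) < f x" "f x < f (x + d)"
    and der: "DERIV f x :> D" and D: "D \<noteq> 0"
  shows "DERIV g (f x) :> inverse D"
proof (rule DERIV_inverse_function[OF _ D incr])
  show "DERIV f (g (f x)) :> D" using inv[of x] der d by simp
  show "isCont g (f x)" by (rule isCont_inverse_function[OF d inv cont])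
  fix y assume y: "f (x - d) < y" "y < f (x + d)"
  obtain z where z: "x - d \<le> z" "z \<le> x + d" "f z = y"
    using IVT[of f "x - d" y "x + d"] y d cont by fastforce
  thus "f (g y) = y" using inv[of z] by (simp add: abs_le_iff)
qed

lemma prox_has_real_derivative:
  fixes G :: "real \<Rightarrow> ereal" and h h' h'' :: "real \<Rightarrow> real"
  assumes conv: "convex_fun G" and not_minf: "\<And>y. G y \<noteq> -\<infinity>" and \<gamma>: "0 < \<gamma>" and e: "0 < e"
    and loc: "\<And>y. y \<in> ball x e \<Longrightarrow> G y = ereal (h y) \<and> (h has_real_derivative h' y) (at y)
                     \<and> (h' has_real_derivative h'' y) (at y)"
  shows "0 \<le> h'' x"
    and "(prox \<gamma> G has_real_derivative inverse (1 + \<gamma> * h'' x)) (at (x + \<gamma> * h' x))"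
proof -
  have sub: "h' y \<in> subdiff G y" if "y \<in> ball x e" for y
    by (rule convex_fun_deriv_in_subdiff[OF conv not_minf open_ball that]) (use loc that in auto)
  have mono: "h' y \<le> h' z" if "y \<in> ball x e" "z \<in> ball x e" "y < z" for y z
    using subdiff_mono[OF sub[OF that(1)] sub[OF that(2)]] loc that by auto
  show h'': "0 \<le> h'' x"
  proof (rule ccontr)
    assume "\<not> 0 \<le> h'' x"
    then obtain \<delta> where \<delta>: "0 < \<delta>" "\<And>t. 0 < t \<Longrightarrow> t < \<delta> \<Longrightarrow> h' (x + t) < h' x"
      using DERIV_neg_dec_right[of h' "h'' x" x] loc[of x] e by auto
    define t where "t = min (\<delta> / 2) (e / 2)"
    have "0 < t" "t < \<delta>" "x + t \<in> ball x e" using \<delta> e by (auto simp: t_def dist_real_def)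
    thus False using \<delta>(2) mono[of x "x + t"] e by fastforce
  qed
  define \<psi> where "\<psi> y = y + \<gamma> * h' y" for y
  define d where "d = e / 2"
  have ball: "y \<in> ball x e" if "\<bar>y - x\<bar> \<le> d" for y
    using that e by (simp add: d_def dist_real_def abs_minus_commute)
  have "DERIV (prox \<gamma> G) (\<psi> x) :> inverse (1 + \<gamma> * h'' x)"
  proof (rule DERIV_left_inverse[where f = \<psi> and x = x and d = d])
    show "0 < d" using e by (simp add: d_def)
    show "prox \<gamma> G (\<psi> y) = y" if "\<bar>y - x\<bar> \<le> d" for y
      unfolding \<psi>_def by (rule prox_eq_of_subdiff[OF \<gamma> sub[OF ball[OF that]]]) (use loc ball[OF that] in blast)
    have der: "DERIV \<psi> y :> 1 + \<gamma> * h'' y" if "y \<in> ball x e" for y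
      unfolding \<psi>_def using loc[OF that] by (auto intro!: derivative_eq_intros)
    show "isCont \<psi> y" if "\<bar>y - x\<bar> \<le> d" for y using der[OF ball[OF that]] by (rule DERIV_isCont)
    show "DERIV \<psi> x :> 1 + \<gamma> * h'' x" using der e by simp
    have "\<psi> y < \<psi> z" if "\<bar>y - x\<bar> \<le> d" "\<bar>z - x\<bar> \<le> d" "y < z" for y z
      using mono[OF ball ball, OF that] \<gamma> that unfolding \<psi>_def by (simp add: add_less_le_mono)
    thus "\<psi> (x - d) < \<psi> x" "\<psi> x < \<psi> (x + d)" using e by (auto simp: d_def)
    show "1 + \<gamma> * h'' x \<noteq> 0" using h'' \<gamma> by (smt (verit) mult_nonneg_nonneg)
  qed
  thus "(prox \<gamma> G has_real_derivative inverse (1 + \<gamma> * h'' x)) (at (x + \<gamma> * h' x))"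
    unfolding \<psi>_def .
qed

lemma has_real_derivative_along_line:
  fixes f :: "real^'n \<Rightarrow> real"
  assumes "(f has_derivative (\<lambda>h. D \<bullet> h)) (at (x + t0 *\<^sub>R a))"
  shows "((\<lambda>t. f (x + t *\<^sub>R a)) has_real_derivative (D \<bullet> a)) (at t0)"
proof -
  have "((\<lambda>t. x + t *\<^sub>R a) has_derivative (\<lambda>t. t *\<^sub>R a)) (at t0)"
    by (auto intro!: derivative_eq_intros)
  from has_derivative_compose[OF this assms]
  have "((\<lambda>t. f (x + t *\<^sub>R a)) has_derivative (\<lambda>t. t * (D \<bullet> a))) (at t0)" by simp
  moreover have "(\<lambda>t. t * (D \<bullet> a)) = (*) (D \<bullet> a)" by (auto simp: fun_eq_iff)
  ultimately show ?thesis unfolding has_field_derivative_def by simp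
qed

lemma sum_minimizer_finite:
  fixes f :: "real^'n \<Rightarrow> real" and g :: "'n \<Rightarrow> real \<Rightarrow> ereal" and xs :: "real^'n"
  assumes g_proper: "\<And>j. proper_fun (g j)"
    and xs_min: "\<And>x. ereal (f xs) + (\<Sum>j\<in>UNIV. g j (xs $ j)) \<le> ereal (f x) + (\<Sum>j\<in>UNIV. g j (x $ j))"
  shows "g j (xs $ j) \<noteq> \<infinity>"
proof -
  define x :: "real^'n" where "x = (\<chi> i. SOME y. g i y \<noteq> \<infinity>)"
  have "g i (x $ i) \<noteq> \<infinity>" for i
    using someI_ex[of "\<lambda>y. g i y \<noteq> \<infinity>"] g_proper[of i] unfolding proper_fun_def x_def by auto
  hence "ereal (f x) + (\<Sum>i\<in>UNIV. g i (x $ i)) \<noteq> \<infinity>" by (simp add: sum_Pinfty)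
  hence "(\<Sum>i\<in>UNIV. g i (xs $ i)) \<noteq> \<infinity>" using xs_min[of x] by (auto simp: top_unique)
  thus ?thesis by (simp add: sum_Pinfty)
qed

lemma coordinate_optimality:
  fixes f :: "real^'n \<Rightarrow> real" and grad :: "real^'n \<Rightarrow> real^'n" and g :: "'n \<Rightarrow> real \<Rightarrow> ereal"
    and xs :: "real^'n"
  assumes f_grad: "\<And>x. (f has_derivative (\<lambda>h. grad x \<bullet> h)) (at x)"
    and g_proper: "\<And>j. proper_fun (g j)"
    and xs_min: "\<And>x. ereal (f xs) + (\<Sum>j\<in>UNIV. g j (xs $ j)) \<le> ereal (f x) + (\<Sum>j\<in>UNIV. g j (x $ j))"
    and e: "0 < e" and loc: "\<And>y. y \<in> ball (xs $ j) e \<Longrightarrow> g j y = ereal (h y)"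
    and h: "(h has_real_derivative d) (at (xs $ j))"
  shows "d = - grad xs $ j"
proof -
  define rest where "rest = (\<Sum>i\<in>UNIV - {j}. g i (xs $ i))"
  have fin: "g i (xs $ i) = ereal (real_of_ereal (g i (xs $ i)))" for i
    using sum_minimizer_finite[OF g_proper xs_min, of i] g_proper[of i]
    unfolding proper_fun_def by (cases "g i (xs $ i)") auto
  have r: "rest = ereal (\<Sum>i\<in>UNIV - {j}. real_of_ereal (g i (xs $ i)))"
    unfolding rest_def by (subst sum.cong[OF refl fin]) simp_all
  have split: "(\<Sum>i\<in>UNIV. g i (x $ i)) = g j (x $ j) + rest" if "\<And>i. i \<noteq> j \<Longrightarrow> x $ i = xs $ i" for x
  proof -
    have "(\<Sum>i\<in>UNIV - {j}. g i (x $ i)) = rest" unfolding rest_def using that by (intro sum.cong) auto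
    thus ?thesis by (simp add: sum.remove[of UNIV j])
  qed
  define \<phi> where "\<phi> t = f (xs + t *\<^sub>R axis j 1) + h (xs $ j + t)" for t
  have "\<phi> 0 \<le> \<phi> t" if "\<bar>0 - t\<bar> < e" for t
  proof -
    have "xs $ j + t \<in> ball (xs $ j) e" using that by (simp add: dist_real_def)
    thus ?thesis
      using xs_min[of "xs + t *\<^sub>R axis j 1"] split[of xs] split[of "xs + t *\<^sub>R axis j 1"]
        loc[of "xs $ j"] loc[of "xs $ j + t"] e r
      by (simp add: \<phi>_def axis_def)
  qed
  moreover have "(\<phi> has_real_derivative grad xs \<bullet> axis j 1 + d) (at 0)"
    unfolding \<phi>_def using has_real_derivative_along_line[of f "grad xs" xs 0 "axis j 1"] f_grad
      DERIV_chain2[OF _ DERIV_add[OF DERIV_const DERIV_ident], of h d "xs $ j" 0] h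
    by (auto intro!: DERIV_add)
  ultimately have "grad xs \<bullet> axis j 1 + d = 0" using DERIV_local_min e by blast
  thus ?thesis by (simp add: inner_axis)
qed

lemma matrix_vector_mult_axis_nth: "((H :: real^'n^'m) *v axis k 1) $ i = H $ i $ k"
  by (simp add: matrix_vector_mult_basis column_def)

lemma second_difference_mean_value:
  fixes f :: "real^'n \<Rightarrow> real" and grad :: "real^'n \<Rightarrow> real^'n"
  assumes f_grad: "\<And>x. (f has_derivative (\<lambda>h. grad x \<bullet> h)) (at x)" and t: "0 < t"
  obtains \<sigma> where "0 < \<sigma>" "\<sigma> < t"
    "f (x0 + t *\<^sub>R b + t *\<^sub>R a) - f (x0 + t *\<^sub>R a) - f (x0 + t *\<^sub>R b) + f x0
       = t * ((grad (x0 + t *\<^sub>R b + \<sigma> *\<^sub>R a) - grad (x0 + \<sigma> *\<^sub>R a)) \<bullet> a)"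
proof -
  define \<phi> where "\<phi> s = f (x0 + t *\<^sub>R b + s *\<^sub>R a) - f (x0 + s *\<^sub>R a)" for s
  have "DERIV \<phi> s :> (grad (x0 + t *\<^sub>R b + s *\<^sub>R a) - grad (x0 + s *\<^sub>R a)) \<bullet> a" for s
    unfolding \<phi>_def inner_diff_left by (intro DERIV_diff has_real_derivative_along_line f_grad)
  then obtain \<sigma> where "0 < \<sigma>" "\<sigma> < t"
      "\<phi> t - \<phi> 0 = (t - 0) * ((grad (x0 + t *\<^sub>R b + \<sigma> *\<^sub>R a) - grad (x0 + \<sigma> *\<^sub>R a)) \<bullet> a)"
    using MVT2[OF t, of \<phi> "\<lambda>s. (grad (x0 + t *\<^sub>R b + s *\<^sub>R a) - grad (x0 + s *\<^sub>R a)) \<bullet> a"] by blast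
  thus thesis using that unfolding \<phi>_def by (simp add: algebra_simps)
qed

lemma second_difference_estimate:
  fixes f :: "real^'n \<Rightarrow> real" and grad :: "real^'n \<Rightarrow> real^'n" and H :: "real^'n^'n"
  assumes f_grad: "\<And>x. (f has_derivative (\<lambda>h. grad x \<bullet> h)) (at x)"
    and der: "(grad has_derivative (\<lambda>h. H *v h)) (at x0)" and \<epsilon>: "0 < \<epsilon>"
  obtains \<delta> where "0 < \<delta>"
    "\<And>a b t. norm a = 1 \<Longrightarrow> norm b = 1 \<Longrightarrow> 0 < t \<Longrightarrow> t < \<delta> \<Longrightarrow>
      \<bar>f (x0 + t *\<^sub>R b + t *\<^sub>R a) - f (x0 + t *\<^sub>R a) - f (x0 + t *\<^sub>R b) + f x0 - t\<^sup>2 * ((H *v b) \<bullet> a)\<bar>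
        \<le> 3 * \<epsilon> * t\<^sup>2"
proof -
  obtain \<delta>0 where \<delta>0: "0 < \<delta>0" and rem: "\<And>y. norm (y - x0) < \<delta>0 \<Longrightarrow>
      norm (grad y - grad x0 - H *v (y - x0)) \<le> \<epsilon> * norm (y - x0)"
    using der \<epsilon> unfolding has_derivative_at_alt by blast
  show thesis
  proof (rule that[of "\<delta>0 / 2"])
    show "0 < \<delta>0 / 2" using \<delta>0 by simp
    fix a b :: "real^'n" and t :: real
    assume a: "norm a = 1" and b: "norm b = 1" and t: "0 < t" "t < \<delta>0 / 2"
    obtain \<sigma> where \<sigma>: "0 < \<sigma>" "\<sigma> < t" and mvt:
      "f (x0 + t *\<^sub>R b + t *\<^sub>R a) - f (x0 + t *\<^sub>R a) - f (x0 + t *\<^sub>R b) + f x0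
        = t * ((grad (x0 + t *\<^sub>R b + \<sigma> *\<^sub>R a) - grad (x0 + \<sigma> *\<^sub>R a)) \<bullet> a)"
      using second_difference_mean_value[OF f_grad t(1)] by blast
    define y1 where "y1 = x0 + t *\<^sub>R b + \<sigma> *\<^sub>R a"
    define y2 where "y2 = x0 + \<sigma> *\<^sub>R a"
    define R1 where "R1 = grad y1 - grad x0 - H *v (y1 - x0)"
    define R2 where "R2 = grad y2 - grad x0 - H *v (y2 - x0)"
    have n1: "norm (y1 - x0) \<le> t + \<sigma>"
      unfolding y1_def using norm_triangle_ineq[of "t *\<^sub>R b" "\<sigma> *\<^sub>R a"] a b t \<sigma> by simp
    have "norm R1 \<le> \<epsilon> * norm (y1 - x0)" unfolding R1_def by (rule rem) (use n1 \<sigma> t in linarith)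
    also have "\<dots> \<le> \<epsilon> * (2 * t)" using n1 \<sigma> \<epsilon> by (intro mult_left_mono) auto
    finally have R1: "norm R1 \<le> \<epsilon> * (2 * t)" .
    have n2: "norm (y2 - x0) = \<sigma>" unfolding y2_def using a \<sigma> by simp
    have "norm R2 \<le> \<epsilon> * norm (y2 - x0)" unfolding R2_def by (rule rem) (use n2 \<sigma> t in linarith)
    also have "\<dots> \<le> \<epsilon> * t" using n2 \<sigma> \<epsilon> by (intro mult_left_mono) auto
    finally have R2: "norm R2 \<le> \<epsilon> * t" .
    have "(grad y1 - grad y2) \<bullet> a - t * ((H *v b) \<bullet> a) = (R1 - R2) \<bullet> a"
      unfolding R1_def R2_def y1_def y2_def
      by (simp add: algebra_simps matrix_vector_right_distrib matrix_vector_mult_scaleR inner_diff_left)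
    also have "\<bar>\<dots>\<bar> \<le> norm R1 + norm R2"
      using Cauchy_Schwarz_ineq2[of "R1 - R2" a] norm_triangle_ineq4[of R1 R2] a by simp
    finally have "\<bar>(grad y1 - grad y2) \<bullet> a - t * ((H *v b) \<bullet> a)\<bar> \<le> 3 * \<epsilon> * t" using R1 R2 by simp
    hence "t * \<bar>(grad y1 - grad y2) \<bullet> a - t * ((H *v b) \<bullet> a)\<bar> \<le> 3 * \<epsilon> * t\<^sup>2"
      using t by (simp add: mult_left_mono power2_eq_square mult_ac)
    moreover have "t * ((grad y1 - grad y2) \<bullet> a) - t\<^sup>2 * ((H *v b) \<bullet> a)
        = t * ((grad y1 - grad y2) \<bullet> a - t * ((H *v b) \<bullet> a))"
      by (simp add: algebra_simps power2_eq_square)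
    ultimately show "\<bar>f (x0 + t *\<^sub>R b + t *\<^sub>R a) - f (x0 + t *\<^sub>R a) - f (x0 + t *\<^sub>R b) + f x0
        - t\<^sup>2 * ((H *v b) \<bullet> a)\<bar> \<le> 3 * \<epsilon> * t\<^sup>2"
      unfolding mvt y1_def[symmetric] y2_def[symmetric] using t by (simp add: abs_mult)
  qed
qed

lemma hessian_symmetric:
  fixes f :: "real^'n \<Rightarrow> real" and grad :: "real^'n \<Rightarrow> real^'n" and H :: "real^'n^'n"
  assumes f_grad: "\<And>x. (f has_derivative (\<lambda>h. grad x \<bullet> h)) (at x)"
    and der: "(grad has_derivative (\<lambda>h. H *v h)) (at x0)"
  shows "H $ i $ k = H $ k $ i"
proof (rule ccontr)
  assume ne: "H $ i $ k \<noteq> H $ k $ i"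
  define \<epsilon> where "\<epsilon> = \<bar>H $ i $ k - H $ k $ i\<bar> / 12"
  have \<epsilon>: "0 < \<epsilon>" unfolding \<epsilon>_def using ne by simp
  obtain \<delta> where \<delta>: "0 < \<delta>" and est: "\<And>a b t. norm a = 1 \<Longrightarrow> norm b = 1 \<Longrightarrow> 0 < t \<Longrightarrow> t < \<delta> \<Longrightarrow>
      \<bar>f (x0 + t *\<^sub>R b + t *\<^sub>R a) - f (x0 + t *\<^sub>R a) - f (x0 + t *\<^sub>R b) + f x0 - t\<^sup>2 * ((H *v b) \<bullet> a)\<bar>
        \<le> 3 * \<epsilon> * t\<^sup>2"
    using second_difference_estimate[OF f_grad der \<epsilon>] by blast
  define t where "t = \<delta> / 2"
  have t: "0 < t" "t < \<delta>" unfolding t_def using \<delta> by auto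
  define a :: "real^'n" where "a = axis i 1"
  define b :: "real^'n" where "b = axis k 1"
  define D where "D = f (x0 + t *\<^sub>R b + t *\<^sub>R a) - f (x0 + t *\<^sub>R a) - f (x0 + t *\<^sub>R b) + f x0"
  have "\<bar>D - t\<^sup>2 * H $ i $ k\<bar> \<le> 3 * \<epsilon> * t\<^sup>2"
    using est[of a b t] t unfolding D_def a_def b_def by (simp add: inner_axis matrix_vector_mult_axis_nth)
  moreover have "\<bar>D - t\<^sup>2 * H $ k $ i\<bar> \<le> 3 * \<epsilon> * t\<^sup>2"
    using est[of b a t] t unfolding D_def a_def b_def by (simp add: inner_axis matrix_vector_mult_axis_nth add_ac)
  moreover have "(D - t\<^sup>2 * H $ k $ i) - (D - t\<^sup>2 * H $ i $ k) = t\<^sup>2 * (H $ i $ k - H $ k $ i)"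
    by (simp add: algebra_simps)
  hence "\<bar>(D - t\<^sup>2 * H $ k $ i) - (D - t\<^sup>2 * H $ i $ k)\<bar> = t\<^sup>2 * \<bar>H $ i $ k - H $ k $ i\<bar>"
    by (simp add: abs_mult)
  ultimately have "t\<^sup>2 * \<bar>H $ i $ k - H $ k $ i\<bar> \<le> 6 * \<epsilon> * t\<^sup>2"
    using abs_triangle_ineq4[of "D - t\<^sup>2 * H $ k $ i" "D - t\<^sup>2 * H $ i $ k"] by linarith
  hence "t\<^sup>2 * \<bar>H $ i $ k - H $ k $ i\<bar> \<le> t\<^sup>2 * (6 * \<epsilon>)" by (simp add: mult_ac)
  hence "\<bar>H $ i $ k - H $ k $ i\<bar> \<le> 6 * \<epsilon>" using t by simp
  thus False using \<epsilon> unfolding \<epsilon>_def by simp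
qed

lemma partial_deriv_le_coord_bound:
  fixes grad :: "real^'n \<Rightarrow> real^'n" and H :: "real^'n^'n"
  assumes der: "(grad has_derivative (\<lambda>h. H *v h)) (at x)"
    and L: "\<And>y t. \<bar>grad (y + t *\<^sub>R axis j 1) $ j - grad y $ j\<bar> \<le> L * \<bar>t\<bar>"
  shows "H $ j $ j \<le> L"
proof -
  have "((\<lambda>y. grad y \<bullet> axis j 1) has_derivative (\<lambda>h. (H *v h) \<bullet> axis j 1)) (at x)"
    using der by (auto intro!: derivative_eq_intros)
  hence "((\<lambda>y. grad y $ j) has_derivative (\<lambda>h. H $ j \<bullet> h)) (at (x + 0 *\<^sub>R axis j 1))"
    by (simp add: inner_axis matrix_vector_mul_component)
  hence "((\<lambda>t. grad (x + t *\<^sub>R axis j 1) $ j) has_real_derivative H $ j $ j) (at 0)"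
    using has_real_derivative_along_line by (fastforce simp: inner_axis)
  hence lim: "((\<lambda>t. (grad (x + t *\<^sub>R axis j 1) $ j - grad x $ j) / t) \<longlongrightarrow> H $ j $ j) (at 0)"
    unfolding has_field_derivative_iff by simp
  have "eventually (\<lambda>t. (grad (x + t *\<^sub>R axis j 1) $ j - grad x $ j) / t \<le> L) (at 0)"
    unfolding eventually_at_filter
  proof (rule always_eventually, intro allI impI)
    fix t :: real assume "t \<noteq> 0"
    have "(grad (x + t *\<^sub>R axis j 1) $ j - grad x $ j) / t
        \<le> \<bar>grad (x + t *\<^sub>R axis j 1) $ j - grad x $ j\<bar> / \<bar>t\<bar>"
      by (metis abs_divide abs_ge_self)
    also have "\<dots> \<le> L" using L[of x t] \<open>t \<noteq> 0\<close> by (simp add: divide_le_eq)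
    finally show "(grad (x + t *\<^sub>R axis j 1) $ j - grad x $ j) / t \<le> L" .
  qed
  thus ?thesis by (rule tendsto_upperbound[OF lim]) simp
qed

lemma hessian_diag_le_coord_lip:
  fixes grad :: "real^'n \<Rightarrow> real^'n" and H :: "real^'n^'n"
  assumes der: "(grad has_derivative (\<lambda>h. H *v h)) (at x)"
    and lip: "\<exists>L. L-lipschitz_on UNIV grad"
  shows "H $ j $ j \<le> coord_lip grad j"
  unfolding coord_lip_def
proof (rule cInf_greatest)
  obtain L where L: "L-lipschitz_on UNIV grad" using lip by blast
  have "\<bar>grad (y + t *\<^sub>R axis j 1) $ j - grad y $ j\<bar> \<le> L * \<bar>t\<bar>" for y t
  proof -
    have "\<bar>(grad (y + t *\<^sub>R axis j 1) - grad y) $ j\<bar> \<le> norm (grad (y + t *\<^sub>R axis j 1) - grad y)"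
      by (rule component_le_norm_cart)
    also have "\<dots> \<le> L * norm ((y + t *\<^sub>R axis j 1) - y)" by (rule lipschitz_on_normD[OF L]) auto
    finally show ?thesis by simp
  qed
  thus "{L. 0 \<le> L \<and> (\<forall>x t. \<bar>grad (x + t *\<^sub>R axis j 1) $ j - grad x $ j\<bar> \<le> L * \<bar>t\<bar>)} \<noteq> {}"
    using lipschitz_on_nonneg[OF L] by blast
qed (use partial_deriv_le_coord_bound[OF der] in blast)

lemma prox_derivative_at_solution:
  fixes f :: "real^'n \<Rightarrow> real" and grad :: "real^'n \<Rightarrow> real^'n" and g :: "'n \<Rightarrow> real \<Rightarrow> ereal"
    and xs :: "real^'n"
  assumes f_grad: "\<And>x. (f has_derivative (\<lambda>h. grad x \<bullet> h)) (at x)"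
    and g_proper: "\<And>j. proper_fun (g j)" and g_convex: "\<And>j. convex_fun (g j)"
    and xs_min: "\<And>x. ereal (f xs) + (\<Sum>j\<in>UNIV. g j (xs $ j)) \<le> ereal (f x) + (\<Sum>j\<in>UNIV. g j (x $ j))"
    and C2: "C2_near (g j) (xs $ j)" and \<gamma>: "0 < \<gamma>"
  shows "0 < deriv (prox \<gamma> (g j)) (xs $ j - \<gamma> * grad xs $ j)
    \<and> deriv (prox \<gamma> (g j)) (xs $ j - \<gamma> * grad xs $ j) \<le> 1"
proof -
  obtain e h h' h'' where e: "0 < e" and loc: "\<And>y. y \<in> ball (xs $ j) e \<Longrightarrow> g j y = ereal (h y)
      \<and> (h has_real_derivative h' y) (at y) \<and> (h' has_real_derivative h'' y) (at y)"
    using C2 unfolding C2_near_def by blast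
  have not_minf: "\<And>y. g j y \<noteq> -\<infinity>" using g_proper[of j] unfolding proper_fun_def by blast
  have "h' (xs $ j) = - grad xs $ j"
    by (rule coordinate_optimality[OF f_grad g_proper xs_min e]) (use loc e in auto)
  moreover have "0 \<le> h'' (xs $ j)"
    and "(prox \<gamma> (g j) has_real_derivative inverse (1 + \<gamma> * h'' (xs $ j))) (at (xs $ j + \<gamma> * h' (xs $ j)))"
    using prox_has_real_derivative[OF g_convex not_minf \<gamma> e, where x = "xs $ j" and h = h and h' = h'
        and h'' = h''] loc by blast+
  ultimately have "deriv (prox \<gamma> (g j)) (xs $ j - \<gamma> * grad xs $ j) = inverse (1 + \<gamma> * h'' (xs $ j))"
    and "0 \<le> h'' (xs $ j)" by (auto intro: DERIV_imp_deriv)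
  thus ?thesis using \<gamma> by (simp add: inverse_le_1_iff add_pos_nonneg)
qed

unbundle no vec_syntax
unbundle no inner_syntax

lemma real_symmetric_eigenvalue_real:
  fixes A :: "real mat"
  assumes A: "A \<in> carrier_mat n n" and sym: "transpose_mat A = A"
    and ev: "eigenvalue (map_mat complex_of_real A) a"
  shows "Im a = 0"
proof -
  let ?B = "map_mat complex_of_real A"
  have B: "?B \<in> carrier_mat n n" using A by simp
  obtain v where v: "v \<in> carrier_vec n" "v \<noteq> 0\<^sub>v n" "?B *\<^sub>v v = a \<cdot>\<^sub>v v"
    using ev B unfolding eigenvalue_def eigenvector_def by auto
  have Bsym: "transpose_mat ?B = ?B" using sym by (simp add: map_mat_transpose)
  have conjB: "conjugate (?B *\<^sub>v w) = ?B *\<^sub>v conjugate w" if w: "w \<in> carrier_vec n" for w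
  proof (rule eq_vecI)
    fix i assume "i < dim_vec (?B *\<^sub>v conjugate w)"
    hence i: "i < n" using A by simp
    have "conjugate (row ?B i) = row ?B i" using A i by (auto intro!: eq_vecI)
    thus "conjugate (?B *\<^sub>v w) $ i = (?B *\<^sub>v conjugate w) $ i"
      using i A w conjugate_sprod_vec[of "row ?B i" n w] by simp
  qed (use A in simp)
  have "(?B *\<^sub>v v) \<bullet>c v = (transpose_mat ?B *\<^sub>v v) \<bullet> conjugate v" using Bsym by simp
  also have "\<dots> = v \<bullet> (?B *\<^sub>v conjugate v)"
    by (rule transpose_vec_mult_scalar[OF B]) (use v in auto)
  also have "\<dots> = v \<bullet>c (?B *\<^sub>v v)" using conjB[OF v(1)] by simp
  finally have "a * (v \<bullet>c v) = cnj a * (v \<bullet>c v)"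
    using v by (simp add: conjugate_smult_vec)
  moreover have "v \<bullet>c v \<noteq> 0" using v by simp
  ultimately have "cnj a = a" by simp
  thus ?thesis by (metis Reals_cnj_iff complex_is_Real_iff)
qed

lemma real_symmetric_unit_eigenvector:
  fixes A :: "real mat"
  assumes A: "A \<in> carrier_mat n n" and sym: "transpose_mat A = A" and n: "0 < n"
  obtains v e where "v \<in> carrier_vec n" "v \<bullet> v = 1" "A *\<^sub>v v = e \<cdot>\<^sub>v v"
proof -
  let ?B = "map_mat complex_of_real A"
  have B: "?B \<in> carrier_mat n n" using A by simp
  obtain as where cp: "char_poly ?B = (\<Prod>a\<leftarrow>as. [:- a, 1:])" and len: "length as = n"
    using char_poly_factorized[OF B] by auto
  then obtain a as' where as: "as = a # as'" using n by (cases as) auto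
  have "eigenvalue ?B a"
    unfolding eigenvalue_root_char_poly[OF B] cp as by simp
  moreover have "complex_of_real (Re a) = a"
    using real_symmetric_eigenvalue_real[OF A sym calculation] by (simp add: complex_eq_iff)
  ultimately have "poly (map_poly complex_of_real (char_poly A)) (complex_of_real (Re a)) = 0"
    unfolding eigenvalue_root_char_poly[OF B] of_real_hom.char_poly_hom[OF A] by simp
  hence "eigenvalue A (Re a)"
    unfolding eigenvalue_root_char_poly[OF A] of_real_hom.poly_map_poly by simp
  then obtain w where w: "w \<in> carrier_vec n" "w \<noteq> 0\<^sub>v n" "A *\<^sub>v w = Re a \<cdot>\<^sub>v w"
    using A unfolding eigenvalue_def eigenvector_def by auto
  have ww: "0 < w \<bullet> w" using conjugate_square_greater_0_vec[OF w(1)] w(2) by simp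
  define u where "u = (1 / sqrt (w \<bullet> w)) \<cdot>\<^sub>v w"
  show thesis
  proof
    show "u \<in> carrier_vec n" unfolding u_def using w by simp
    show "u \<bullet> u = 1" unfolding u_def using w(1) ww by (simp add: power2_eq_square[symmetric])
    show "A *\<^sub>v u = Re a \<cdot>\<^sub>v u" unfolding u_def
      using mult_mat_vec[OF A w(1)] w(3) by (simp add: smult_smult_assoc mult.commute)
  qed
qed

definition rank_one_mat :: "real \<Rightarrow> real vec \<Rightarrow> real mat" where
  "rank_one_mat c r = mat (dim_vec r) (dim_vec r) (\<lambda>(i, k). c * r $ i * r $ k)"

lemma rank_one_mat_carrier[simp]: "rank_one_mat c r \<in> carrier_mat (dim_vec r) (dim_vec r)"
  by (simp add: rank_one_mat_def)

lemma transpose_rank_one_mat[simp]: "transpose_mat (rank_one_mat c r) = rank_one_mat c r"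
  by (auto simp: rank_one_mat_def intro!: eq_matI)

lemma rank_one_mat_mult_vec:
  assumes x: "x \<in> carrier_vec (dim_vec r)"
  shows "rank_one_mat c r *\<^sub>v x = (c * (r \<bullet> x)) \<cdot>\<^sub>v r"
proof (rule eq_vecI)
  fix i assume "i < dim_vec ((c * (r \<bullet> x)) \<cdot>\<^sub>v r)"
  hence i: "i < dim_vec r" by simp
  have "(rank_one_mat c r *\<^sub>v x) $ i = (\<Sum>k<dim_vec r. c * r $ i * r $ k * x $ k)"
    using i x by (simp add: rank_one_mat_def scalar_prod_def atLeast0LessThan)
  also have "\<dots> = c * r $ i * (\<Sum>k<dim_vec r. r $ k * x $ k)"
    by (simp add: sum_distrib_left mult.assoc)
  finally show "(rank_one_mat c r *\<^sub>v x) $ i = ((c * (r \<bullet> x)) \<cdot>\<^sub>v r) $ i"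
    using i x by (simp add: scalar_prod_def atLeast0LessThan)
qed (simp add: rank_one_mat_def)

lemma one_minus_rank_one_mat_mult_vec:
  assumes x: "x \<in> carrier_vec (dim_vec r)"
  shows "(1\<^sub>m (dim_vec r) - rank_one_mat c r) *\<^sub>v x = x - (c * (r \<bullet> x)) \<cdot>\<^sub>v r"
  using x by (simp add: minus_mult_distrib_mat_vec[OF _ rank_one_mat_carrier x] rank_one_mat_mult_vec)

lemma scalar_prod_minus_smult_self:
  fixes x r :: "real vec"
  assumes "x \<in> carrier_vec n" "r \<in> carrier_vec n"
  shows "(x - t \<cdot>\<^sub>v r) \<bullet> (x - t \<cdot>\<^sub>v r) = x \<bullet> x - 2 * t * (r \<bullet> x) + t\<^sup>2 * (r \<bullet> r)"
  using assms
  by (simp add: minus_scalar_prod_distrib[of _ n] scalar_prod_minus_distrib[of _ n]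
      comm_scalar_prod[of x n r] algebra_simps power2_eq_square)

lemma one_minus_rank_one_mat_sq_norm:
  assumes x: "x \<in> carrier_vec (dim_vec r)"
  shows "((1\<^sub>m (dim_vec r) - rank_one_mat c r) *\<^sub>v x) \<bullet> ((1\<^sub>m (dim_vec r) - rank_one_mat c r) *\<^sub>v x)
    = x \<bullet> x - c * (2 - c * (r \<bullet> r)) * (r \<bullet> x)\<^sup>2"
  unfolding one_minus_rank_one_mat_mult_vec[OF x]
    scalar_prod_minus_smult_self[OF x carrier_vecI[OF refl]]
  by (simp add: algebra_simps power2_eq_square)

(* For w = 0 the division by zero makes this the identity. *)
definition householder :: "real vec \<Rightarrow> real mat" where
  "householder w = 1\<^sub>m (dim_vec w) - rank_one_mat (2 / (w \<bullet> w)) w"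

lemma householder_carrier[simp]: "householder w \<in> carrier_mat (dim_vec w) (dim_vec w)"
  unfolding householder_def by (rule minus_carrier_mat[OF rank_one_mat_carrier])

lemma transpose_householder[simp]: "transpose_mat (householder w) = householder w"
  unfolding householder_def by (subst transpose_minus) auto

lemma householder_mult_vec:
  assumes "x \<in> carrier_vec (dim_vec w)"
  shows "householder w *\<^sub>v x = x - (2 * (w \<bullet> x) / (w \<bullet> w)) \<cdot>\<^sub>v w"
  using one_minus_rank_one_mat_mult_vec[OF assms] by (simp add: householder_def)

lemma householder_involution:
  assumes x: "x \<in> carrier_vec (dim_vec w)"
  shows "householder w *\<^sub>v (householder w *\<^sub>v x) = x"
proof -
  define t where "t = 2 * (w \<bullet> x) / (w \<bullet> w)"
  have w: "w \<in> carrier_vec (dim_vec w)" by simp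
  have Hx: "householder w *\<^sub>v x = x - t \<cdot>\<^sub>v w"
    unfolding t_def by (rule householder_mult_vec[OF x])
  have tw: "t \<cdot>\<^sub>v w \<in> carrier_vec (dim_vec w)" by simp
  have "w \<bullet> (x - t \<cdot>\<^sub>v w) = w \<bullet> x - t * (w \<bullet> w)"
    using scalar_prod_minus_distrib[OF w x tw] by simp
  hence "2 * (w \<bullet> (x - t \<cdot>\<^sub>v w)) / (w \<bullet> w) = - t"
    unfolding t_def by (cases "w \<bullet> w = 0") (auto simp: field_simps)
  hence "householder w *\<^sub>v (x - t \<cdot>\<^sub>v w) = (x - t \<cdot>\<^sub>v w) - (- t) \<cdot>\<^sub>v w"
    using householder_mult_vec[of "x - t \<cdot>\<^sub>v w" w] x by simp
  also have "\<dots> = x" using x by (intro eq_vecI) auto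
  finally show ?thesis unfolding Hx .
qed

lemma householder_scalar_prod:
  assumes x: "x \<in> carrier_vec (dim_vec w)" and y: "y \<in> carrier_vec (dim_vec w)"
  shows "(householder w *\<^sub>v x) \<bullet> (householder w *\<^sub>v y) = x \<bullet> y"
  using transpose_vec_mult_scalar[OF householder_carrier mult_mat_vec_carrier[OF householder_carrier y] x]
  by (simp add: householder_involution[OF y])

lemma householder_to_unit_vec:
  assumes v: "v \<in> carrier_vec n" "v \<bullet> v = 1" and n: "0 < n"
  shows "householder (v - unit_vec n 0) *\<^sub>v v = unit_vec n 0"
proof -
  define w where "w = v - unit_vec n 0"
  have w: "w \<in> carrier_vec n" unfolding w_def using v by simp
  have wv: "w \<bullet> v = 1 - v $ 0"
    unfolding w_def using v n by (simp add: minus_scalar_prod_distrib)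
  have ww: "w \<bullet> w = 2 - 2 * v $ 0"
    unfolding w_def using v n
    by (simp add: minus_scalar_prod_distrib[of _ n] scalar_prod_minus_distrib[of _ n]
        comm_scalar_prod[of "unit_vec n 0" n v])
  show ?thesis
  proof (cases "w \<bullet> w = 0")
    case True
    hence "w = 0\<^sub>v n" using conjugate_square_eq_0_vec[OF w] by simp
    have "v = unit_vec n 0"
    proof (rule eq_vecI)
      fix i assume "i < dim_vec (unit_vec n 0)"
      hence "i < n" by simp
      moreover have "w $ i = 0" using \<open>w = 0\<^sub>v n\<close> \<open>i < n\<close> by simp
      ultimately show "v $ i = unit_vec n 0 $ i" using v unfolding w_def by auto
    qed (use v in simp)
    moreover have "householder w *\<^sub>v v = v"
      using householder_mult_vec[of v w] True v w by (auto intro!: eq_vecI)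
    ultimately show ?thesis unfolding w_def by simp
  next
    case False
    hence "2 * (w \<bullet> v) / (w \<bullet> w) = 1" unfolding wv ww by simp
    hence "householder w *\<^sub>v v = v - w" using householder_mult_vec[of v w] v w by simp
    also have "\<dots> = unit_vec n 0" unfolding w_def using v by (intro eq_vecI) auto
    finally show ?thesis unfolding w_def .
  qed
qed

lemma mult_mat_vec_vCons_0:
  fixes C :: "real mat"
  assumes C: "C \<in> carrier_mat (Suc n) (Suc n)" and x: "x \<in> carrier_vec n"
    and row0: "\<And>j. j < n \<Longrightarrow> C $$ (0, Suc j) = 0"
  shows "C *\<^sub>v vCons 0 x = vCons 0 (mat n n (\<lambda>(i, j). C $$ (Suc i, Suc j)) *\<^sub>v x)"
proof (rule eq_vecI)
  fix i assume "i < dim_vec (vCons 0 (mat n n (\<lambda>(i, j). C $$ (Suc i, Suc j)) *\<^sub>v x))"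
  hence i: "i < Suc n" by simp
  have "row C i = vCons (C $$ (i, 0)) (vec n (\<lambda>j. C $$ (i, Suc j)))"
    using C by (simp add: row_def vec_Suc o_def)
  hence Ci: "(C *\<^sub>v vCons 0 x) $ i = vec n (\<lambda>j. C $$ (i, Suc j)) \<bullet> x"
    using i C by simp
  show "(C *\<^sub>v vCons 0 x) $ i = vCons 0 (mat n n (\<lambda>(i, j). C $$ (Suc i, Suc j)) *\<^sub>v x) $ i"
  proof (cases i)
    case 0
    have "vec n (\<lambda>j. C $$ (0, Suc j)) = 0\<^sub>v n" using row0 by (intro eq_vecI) auto
    thus ?thesis using Ci x 0 by simp
  next
    case (Suc k)
    have "row (mat n n (\<lambda>(i, j). C $$ (Suc i, Suc j))) k = vec n (\<lambda>j. C $$ (i, Suc j))"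
      using Suc i by (intro eq_vecI) auto
    thus ?thesis using Ci i Suc by simp
  qed
qed (use C in simp)

lemma householder_deflation:
  fixes A :: "real mat"
  assumes A: "A \<in> carrier_mat (Suc n) (Suc n)" "transpose_mat A = A"
    and v: "v \<in> carrier_vec (Suc n)" "v \<bullet> v = 1" "A *\<^sub>v v = e \<cdot>\<^sub>v v"
  defines "H \<equiv> householder (v - unit_vec (Suc n) 0)"
  defines "C \<equiv> H * A * H"
  shows "C \<in> carrier_mat (Suc n) (Suc n)" and "transpose_mat C = C"
    and "\<And>y. y \<in> carrier_vec (Suc n) \<Longrightarrow> H *\<^sub>v (C *\<^sub>v y) = A *\<^sub>v (H *\<^sub>v y)"
    and "C *\<^sub>v unit_vec (Suc n) 0 = e \<cdot>\<^sub>v unit_vec (Suc n) 0"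
    and "\<And>j. j < n \<Longrightarrow> C $$ (0, Suc j) = 0"
proof -
  have H: "H \<in> carrier_mat (Suc n) (Suc n)"
    using householder_carrier[of "v - unit_vec (Suc n) 0"] v unfolding H_def by simp
  have HH: "H *\<^sub>v (H *\<^sub>v y) = y" if "y \<in> carrier_vec (Suc n)" for y
    using householder_involution[of y "v - unit_vec (Suc n) 0"] that v unfolding H_def by simp
  have Hv: "H *\<^sub>v v = unit_vec (Suc n) 0"
    unfolding H_def by (rule householder_to_unit_vec[OF v(1,2)]) simp
  have Cy: "C *\<^sub>v y = H *\<^sub>v (A *\<^sub>v (H *\<^sub>v y))" if y: "y \<in> carrier_vec (Suc n)" for y
  proof -
    have "C *\<^sub>v y = (H * A) *\<^sub>v (H *\<^sub>v y)"
      unfolding C_def by (rule assoc_mult_mat_vec) (use H A y in auto)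
    also have "\<dots> = H *\<^sub>v (A *\<^sub>v (H *\<^sub>v y))"
      by (rule assoc_mult_mat_vec) (use H A y in auto)
    finally show ?thesis .
  qed
  show C: "C \<in> carrier_mat (Suc n) (Suc n)" unfolding C_def using H A by simp
  show "H *\<^sub>v (C *\<^sub>v y) = A *\<^sub>v (H *\<^sub>v y)" if "y \<in> carrier_vec (Suc n)" for y
    using Cy[OF that] HH H A that by simp
  have "transpose_mat C = H * (A * H)"
    unfolding C_def using H A
    by (simp add: transpose_mult[of _ "Suc n" "Suc n" _ "Suc n"] H_def)
  also have "\<dots> = C" unfolding C_def using H A by (simp add: assoc_mult_mat[of _ "Suc n" "Suc n"])
  finally show CT: "transpose_mat C = C" .
  have "A *\<^sub>v (H *\<^sub>v unit_vec (Suc n) 0) = e \<cdot>\<^sub>v v" using HH[OF v(1)] Hv v(3) by simp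
  thus Ce: "C *\<^sub>v unit_vec (Suc n) 0 = e \<cdot>\<^sub>v unit_vec (Suc n) 0"
    using Cy[of "unit_vec (Suc n) 0"] mult_mat_vec[OF H v(1)] Hv by simp
  fix j assume "j < n"
  have "C $$ (0, Suc j) = C $$ (Suc j, 0)"
    using CT C \<open>j < n\<close> by (metis Suc_mono carrier_matD index_transpose_mat(1) zero_less_Suc)
  also have "\<dots> = (C *\<^sub>v unit_vec (Suc n) 0) $ Suc j" using C \<open>j < n\<close> by simp
  finally show "C $$ (0, Suc j) = 0" unfolding Ce using \<open>j < n\<close> by simp
qed

definition orthonormal_eigenvectors :: "nat \<Rightarrow> real mat \<Rightarrow> (nat \<Rightarrow> real vec) \<Rightarrow> (nat \<Rightarrow> real) \<Rightarrow> bool" where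
  "orthonormal_eigenvectors n A u d \<longleftrightarrow>
     (\<forall>i<n. u i \<in> carrier_vec n \<and> A *\<^sub>v u i = d i \<cdot>\<^sub>v u i) \<and>
     (\<forall>i<n. \<forall>j<n. u i \<bullet> u j = (if i = j then 1 else 0))"

lemma orthonormal_eigenvectors_vCons:
  fixes C :: "real mat"
  assumes C: "C \<in> carrier_mat (Suc n) (Suc n)" and row0: "\<And>j. j < n \<Longrightarrow> C $$ (0, Suc j) = 0"
    and col0: "C *\<^sub>v unit_vec (Suc n) 0 = e \<cdot>\<^sub>v unit_vec (Suc n) 0"
    and u: "orthonormal_eigenvectors n (mat n n (\<lambda>(i, j). C $$ (Suc i, Suc j))) u d"
  shows "orthonormal_eigenvectors (Suc n) C
    (\<lambda>i. case i of 0 \<Rightarrow> unit_vec (Suc n) 0 | Suc k \<Rightarrow> vCons 0 (u k)) (\<lambda>i. case i of 0 \<Rightarrow> e | Suc k \<Rightarrow> d k)"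
  unfolding orthonormal_eigenvectors_def
proof (intro conjI allI impI)
  fix i assume i: "i < Suc n"
  show "(case i of 0 \<Rightarrow> unit_vec (Suc n) 0 | Suc k \<Rightarrow> vCons 0 (u k)) \<in> carrier_vec (Suc n)"
    using i u by (auto simp: orthonormal_eigenvectors_def split: nat.split)
  show "C *\<^sub>v (case i of 0 \<Rightarrow> unit_vec (Suc n) 0 | Suc k \<Rightarrow> vCons 0 (u k))
      = (case i of 0 \<Rightarrow> e | Suc k \<Rightarrow> d k) \<cdot>\<^sub>v (case i of 0 \<Rightarrow> unit_vec (Suc n) 0 | Suc k \<Rightarrow> vCons 0 (u k))"
  proof (cases i)
    case 0
    then show ?thesis using col0 by simp
  next
    case (Suc k)
    hence "C *\<^sub>v vCons 0 (u k) = vCons 0 (d k \<cdot>\<^sub>v u k)"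
      using mult_mat_vec_vCons_0[OF C _ row0] u i by (simp add: orthonormal_eigenvectors_def)
    also have "\<dots> = d k \<cdot>\<^sub>v vCons 0 (u k)" by (intro eq_vecI) (auto simp: vec_index_vCons)
    finally show ?thesis using Suc by simp
  qed
  fix j assume "j < Suc n"
  thus "(case i of 0 \<Rightarrow> unit_vec (Suc n) 0 | Suc k \<Rightarrow> vCons 0 (u k))
      \<bullet> (case j of 0 \<Rightarrow> unit_vec (Suc n) 0 | Suc k \<Rightarrow> vCons 0 (u k)) = (if i = j then 1 else 0)"
    using i u by (auto simp: orthonormal_eigenvectors_def split: nat.split)
qed

lemma real_symmetric_orthonormal_eigenvectors:
  fixes A :: "real mat"
  assumes "A \<in> carrier_mat n n" "transpose_mat A = A"
  shows "\<exists>u d. orthonormal_eigenvectors n A u d"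
  using assms
proof (induction n arbitrary: A)
  case 0
  then show ?case by (auto simp: orthonormal_eigenvectors_def)
next
  case (Suc n)
  have A: "A \<in> carrier_mat (Suc n) (Suc n)" "transpose_mat A = A" by fact+
  obtain v e where v: "v \<in> carrier_vec (Suc n)" "v \<bullet> v = 1" "A *\<^sub>v v = e \<cdot>\<^sub>v v"
    using real_symmetric_unit_eigenvector[OF A] by auto
  define H where "H = householder (v - unit_vec (Suc n) 0)"
  define C where "C = H * A * H"
  note defl = householder_deflation[OF A v, folded H_def, folded C_def]
  have H: "H \<in> carrier_mat (Suc n) (Suc n)"
    using householder_carrier[of "v - unit_vec (Suc n) 0"] v unfolding H_def by simp
  have "transpose_mat (mat n n (\<lambda>(i, j). C $$ (Suc i, Suc j))) = mat n n (\<lambda>(i, j). C $$ (Suc i, Suc j))"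
    using defl(1,2) by (auto intro!: eq_matI) (metis carrier_matD index_transpose_mat(1) Suc_mono)
  then obtain u' d' where "orthonormal_eigenvectors n (mat n n (\<lambda>(i, j). C $$ (Suc i, Suc j))) u' d'"
    using Suc.IH by fastforce
  from orthonormal_eigenvectors_vCons[OF defl(1) defl(5) defl(4) this]
  obtain w d where w: "orthonormal_eigenvectors (Suc n) C w d" by blast
  have wc: "w i \<in> carrier_vec (Suc n)" if "i < Suc n" for i
    using w that unfolding orthonormal_eigenvectors_def by blast
  have "orthonormal_eigenvectors (Suc n) A (\<lambda>i. H *\<^sub>v w i) d"
    unfolding orthonormal_eigenvectors_def
  proof (intro conjI allI impI)
    fix i assume i: "i < Suc n"
    show "H *\<^sub>v w i \<in> carrier_vec (Suc n)" using H wc[OF i] by simp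
    show "A *\<^sub>v (H *\<^sub>v w i) = d i \<cdot>\<^sub>v (H *\<^sub>v w i)"
      using defl(3)[OF wc[OF i]] w i mult_mat_vec[OF H wc[OF i]]
      unfolding orthonormal_eigenvectors_def by simp
    fix j assume j: "j < Suc n"
    have "(H *\<^sub>v w i) \<bullet> (H *\<^sub>v w j) = w i \<bullet> w j"
      unfolding H_def by (rule householder_scalar_prod) (use wc i j v in auto)
    thus "(H *\<^sub>v w i) \<bullet> (H *\<^sub>v w j) = (if i = j then 1 else 0)"
      using w i j unfolding orthonormal_eigenvectors_def by simp
  qed
  thus ?case by blast
qed

lemma mat_diag_mult_vec:
  assumes y: "y \<in> carrier_vec n"
  shows "mat_diag n d *\<^sub>v y = vec n (\<lambda>i. d i * y $ i)"
proof (rule eq_vecI)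
  fix i assume "i < dim_vec (vec n (\<lambda>i. d i * y $ i))"
  hence i: "i < n" by simp
  have "(mat_diag n d *\<^sub>v y) $ i = (\<Sum>k\<in>{0..<n}. (if i = k then d k else 0) * y $ k)"
    using i y by (simp add: mat_diag_def scalar_prod_def)
  also have "\<dots> = (\<Sum>k\<in>{0..<n}. (if i = k then d i * y $ k else 0))"
    by (rule sum.cong) auto
  also have "\<dots> = d i * y $ i" using i by simp
  finally show "(mat_diag n d *\<^sub>v y) $ i = vec n (\<lambda>i. d i * y $ i) $ i" using i by simp
qed (simp add: mat_diag_def)

lemma transpose_mat_diag[simp]: "transpose_mat (mat_diag n d) = mat_diag n d"
  by (auto simp: mat_diag_def intro!: eq_matI)

lemma real_symmetric_spectral_decomposition:
  fixes M :: "real mat"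
  assumes M: "M \<in> carrier_mat n n" "transpose_mat M = M"
  obtains U d where "U \<in> carrier_mat n n" "transpose_mat U * U = 1\<^sub>m n" "U * transpose_mat U = 1\<^sub>m n"
    and "\<And>i. i < n \<Longrightarrow> M *\<^sub>v col U i = d i \<cdot>\<^sub>v col U i"
    and "\<And>i. i < n \<Longrightarrow> col U i \<bullet> col U i = 1"
    and "M = U * mat_diag n d * transpose_mat U"
proof -
  obtain u d where u: "\<forall>i<n. u i \<in> carrier_vec n \<and> M *\<^sub>v u i = d i \<cdot>\<^sub>v u i"
    "\<forall>i<n. \<forall>j<n. u i \<bullet> u j = (if i = j then 1 else 0)"
    using real_symmetric_orthonormal_eigenvectors[OF M] unfolding orthonormal_eigenvectors_def by blast
  define U where "U = mat n n (\<lambda>(i, j). u j $ i)"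
  have U: "U \<in> carrier_mat n n" unfolding U_def by simp
  have colU: "col U j = u j" if "j < n" for j
    using that u(1) unfolding U_def by (auto intro!: eq_vecI)
  have UTU: "transpose_mat U * U = 1\<^sub>m n"
    using U colU u(2) by (intro eq_matI) auto
  have UUT: "U * transpose_mat U = 1\<^sub>m n"
    by (rule mat_mult_left_right_inverse[OF _ U UTU]) (use U in simp)
  have MU: "M * U = U * mat_diag n d"
  proof (rule eq_matI)
    fix i j assume "i < dim_row (U * mat_diag n d)" "j < dim_col (U * mat_diag n d)"
    hence i: "i < n" and j: "j < n" using U by (auto simp: mat_diag_def)
    have "(M * U) $$ (i, j) = (M *\<^sub>v col U j) $ i" using M U i j by simp
    also have "\<dots> = U $$ (i, j) * d j" using u(1) colU[OF j] i j U by (auto simp: U_def)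
    finally show "(M * U) $$ (i, j) = (U * mat_diag n d) $$ (i, j)"
      using i j U by (simp add: mat_diag_mult_right[OF U])
  qed (use M U in \<open>auto simp: mat_diag_def\<close>)
  have "M = M * (U * transpose_mat U)" using M UUT by simp
  also have "\<dots> = U * mat_diag n d * transpose_mat U"
    using M U by (simp add: assoc_mult_mat[symmetric, of M n n U n] MU)
  finally have Mdec: "M = U * mat_diag n d * transpose_mat U" .
  show thesis by (rule that[OF U UTU UUT _ _ Mdec]) (use colU u in auto)
qed

lemma quadratic_form_conjugate_mat_diag:
  fixes U :: "real mat"
  assumes U: "U \<in> carrier_mat n n" and x: "x \<in> carrier_vec n"
  shows "x \<bullet> ((U * mat_diag n d * transpose_mat U) *\<^sub>v x) = (\<Sum>i<n. d i * (col U i \<bullet> x)\<^sup>2)"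
proof -
  define y where "y = transpose_mat U *\<^sub>v x"
  have y: "y \<in> carrier_vec n" unfolding y_def using U x by simp
  have "(U * mat_diag n d * transpose_mat U) *\<^sub>v x = U *\<^sub>v (mat_diag n d *\<^sub>v y)"
    unfolding y_def using U x by (simp add: assoc_mult_mat_vec[of _ n n _ n])
  moreover have "mat_diag n d *\<^sub>v y \<in> carrier_vec n"
    using mat_diag_dim y by (rule mult_mat_vec_carrier)
  ultimately have "x \<bullet> ((U * mat_diag n d * transpose_mat U) *\<^sub>v x) = y \<bullet> (mat_diag n d *\<^sub>v y)"
    using transpose_vec_mult_scalar[OF U _ x, of "mat_diag n d *\<^sub>v y"] unfolding y_def by simp
  also have "\<dots> = (\<Sum>i<n. d i * (col U i \<bullet> x)\<^sup>2)"
    using y U x unfolding y_def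
    by (simp add: mat_diag_mult_vec scalar_prod_def power2_eq_square lessThan_atLeast0 mult_ac)
  finally show ?thesis .
qed

lemma orthogonal_sq_norm:
  fixes U :: "real mat"
  assumes U: "U \<in> carrier_mat n n" "U * transpose_mat U = 1\<^sub>m n" and x: "x \<in> carrier_vec n"
  shows "x \<bullet> x = (\<Sum>i<n. (col U i \<bullet> x)\<^sup>2)"
  using quadratic_form_conjugate_mat_diag[OF U(1) x, of "\<lambda>_. 1"] U x by simp

lemma orthogonal_conj_mult:
  fixes U P Q :: "real mat"
  assumes U: "U \<in> carrier_mat n n" "transpose_mat U * U = 1\<^sub>m n"
    and P: "P \<in> carrier_mat n n" and Q: "Q \<in> carrier_mat n n"
  shows "(U * P * transpose_mat U) * (U * Q * transpose_mat U) = U * (P * Q) * transpose_mat U"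
proof -
  have UT: "transpose_mat U \<in> carrier_mat n n" using U by simp
  have "transpose_mat U * (U * Q * transpose_mat U) = Q * transpose_mat U"
    using assoc_mult_mat[OF UT U(1) mult_carrier_mat[OF Q UT]] assoc_mult_mat[OF U(1) Q UT] U Q
    by simp
  hence "(U * P * transpose_mat U) * (U * Q * transpose_mat U) = (U * P) * (Q * transpose_mat U)"
    using assoc_mult_mat[OF mult_carrier_mat[OF U(1) P] UT mult_carrier_mat[OF mult_carrier_mat[OF U(1) Q] UT]]
    by simp
  also have "\<dots> = (U * P * Q) * transpose_mat U"
    by (rule assoc_mult_mat[OF mult_carrier_mat[OF U(1) P] Q UT, symmetric])
  also have "U * P * Q = U * (P * Q)" by (rule assoc_mult_mat[OF U(1) P Q])
  finally show ?thesis .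
qed

lemma psd_sqrt_on_eigenvector:
  fixes R :: "real mat"
  assumes R: "R \<in> carrier_mat n n" "transpose_mat R = R" "psd_mat R"
    and u: "u \<in> carrier_vec n" "(R * R) *\<^sub>v u = e \<cdot>\<^sub>v u" and e: "0 \<le> e"
  shows "R *\<^sub>v u = sqrt e \<cdot>\<^sub>v u"
proof -
  define t where "t = sqrt e"
  define a where "a = R *\<^sub>v u"
  define y where "y = a - t \<cdot>\<^sub>v u"
  have t: "0 \<le> t" "t * t = e" unfolding t_def using e by auto
  have a: "a \<in> carrier_vec n" unfolding a_def using R u by simp
  have y: "y \<in> carrier_vec n" unfolding y_def using a u by simp
  have Ra: "R *\<^sub>v a = e \<cdot>\<^sub>v u" unfolding a_def using R u by (metis assoc_mult_mat_vec)
  have "R *\<^sub>v y = e \<cdot>\<^sub>v u - t \<cdot>\<^sub>v a"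
    unfolding y_def using R u a Ra by (simp add: mult_minus_distrib_mat_vec mult_mat_vec a_def)
  also have "\<dots> = (- t) \<cdot>\<^sub>v y" unfolding y_def using a u t
    by (intro eq_vecI) (auto simp: algebra_simps)
  finally have Ry: "R *\<^sub>v y = (- t) \<cdot>\<^sub>v y" .
  have y0: "y = 0\<^sub>v n"
  proof (cases "t = 0")
    case True
    have "y = a" unfolding y_def using True a u(1) by (intro eq_vecI) auto
    hence "y \<bullet> y = u \<bullet> (R *\<^sub>v a)"
      using transpose_vec_mult_scalar[OF R(1) a u(1)] R(2) unfolding a_def by simp
    also have "\<dots> = 0" using Ra True t u by simp
    finally show ?thesis using conjugate_square_eq_0_vec[OF y] by simp
  next
    case False
    have "0 \<le> y \<bullet> (R *\<^sub>v y)" using R y unfolding psd_mat_def by auto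
    hence "t * (y \<bullet> y) \<le> 0" unfolding Ry using y by simp
    hence "y \<bullet> y \<le> 0" using False t by (simp add: mult_le_0_iff)
    thus ?thesis using conjugate_square_eq_0_vec[OF y] conjugate_square_ge_0_vec[of y] by simp
  qed
  show ?thesis
  proof (rule eq_vecI)
    fix i assume "i < dim_vec (sqrt e \<cdot>\<^sub>v u)"
    hence "i < n" using u by simp
    thus "(R *\<^sub>v u) $ i = (sqrt e \<cdot>\<^sub>v u) $ i"
      using y0 a u unfolding y_def a_def t_def by (auto dest!: arg_cong[of _ _ "\<lambda>v. v $ i"])
  qed (use R u in simp)
qed

lemma psd_sqrt_eq_spectral:
  fixes M R U :: "real mat"
  assumes U: "U \<in> carrier_mat n n" "U * transpose_mat U = 1\<^sub>m n"
    and eig: "\<And>i. i < n \<Longrightarrow> M *\<^sub>v col U i = d i \<cdot>\<^sub>v col U i"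
    and d: "\<And>i. i < n \<Longrightarrow> 0 \<le> d i"
    and R: "R \<in> carrier_mat n n" "transpose_mat R = R" "psd_mat R" "R * R = M"
  shows "R = U * mat_diag n (\<lambda>i. sqrt (d i)) * transpose_mat U"
proof -
  have RU: "R * U = U * mat_diag n (\<lambda>i. sqrt (d i))"
  proof (rule eq_matI)
    fix i j assume "i < dim_row (U * mat_diag n (\<lambda>i. sqrt (d i)))"
      and "j < dim_col (U * mat_diag n (\<lambda>i. sqrt (d i)))"
    hence i: "i < n" and j: "j < n" using U by (auto simp: mat_diag_def)
    have "(R * U) $$ (i, j) = (R *\<^sub>v col U j) $ i" using R U i j by simp
    also have "R *\<^sub>v col U j = sqrt (d j) \<cdot>\<^sub>v col U j"
      by (rule psd_sqrt_on_eigenvector[OF R(1-3)]) (use U j eig d R(4) in auto)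
    finally show "(R * U) $$ (i, j) = (U * mat_diag n (\<lambda>i. sqrt (d i))) $$ (i, j)"
      using U i j by (simp add: mat_diag_mult_right[OF U(1)])
  qed (use U R in \<open>auto simp: mat_diag_def\<close>)
  have "R = R * (U * transpose_mat U)" using R U by simp
  also have "\<dots> = (R * U) * transpose_mat U" using R U by (simp add: assoc_mult_mat)
  finally show ?thesis unfolding RU .
qed

lemma sym_sqrt_properties:
  fixes M :: "real mat"
  assumes M: "M \<in> carrier_mat n n" "transpose_mat M = M"
    and psd: "\<And>x. x \<in> carrier_vec n \<Longrightarrow> 0 \<le> x \<bullet> (M *\<^sub>v x)"
  shows "sym_sqrt n M \<in> carrier_mat n n" and "transpose_mat (sym_sqrt n M) = sym_sqrt n M"
    and "sym_sqrt n M * sym_sqrt n M = M"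
proof -
  obtain U d where U: "U \<in> carrier_mat n n" "transpose_mat U * U = 1\<^sub>m n" "U * transpose_mat U = 1\<^sub>m n"
    and eig: "\<And>i. i < n \<Longrightarrow> M *\<^sub>v col U i = d i \<cdot>\<^sub>v col U i"
    and unit: "\<And>i. i < n \<Longrightarrow> col U i \<bullet> col U i = 1"
    and Mdec: "M = U * mat_diag n d * transpose_mat U"
    using real_symmetric_spectral_decomposition[OF M] by blast
  have d: "0 \<le> d i" if "i < n" for i
    using psd[of "col U i"] eig[OF that] unit[OF that] U that by simp
  define S where "S = mat_diag n (\<lambda>i. sqrt (d i))"
  define R where "R = U * S * transpose_mat U"
  have S: "S \<in> carrier_mat n n" unfolding S_def by simp
  have R: "R \<in> carrier_mat n n" unfolding R_def using U S by simp
  have "transpose_mat R = transpose_mat (transpose_mat U) * transpose_mat (U * S)"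
    unfolding R_def by (rule transpose_mult) (use U S in auto)
  also have "transpose_mat (U * S) = transpose_mat S * transpose_mat U"
    by (rule transpose_mult) (use U S in auto)
  finally have RT: "transpose_mat R = R"
    unfolding R_def S_def using U by (simp add: assoc_mult_mat[of U n n _ n])
  have "S * S = mat_diag n (\<lambda>i. sqrt (d i) * sqrt (d i))" unfolding S_def by simp
  also have "\<dots> = mat_diag n d" using d by (intro eq_matI) (auto simp: mat_diag_def)
  finally have RR: "R * R = M" unfolding R_def Mdec by (simp add: orthogonal_conj_mult[OF U(1,2) S S])
  have "psd_mat R" unfolding psd_mat_def
  proof
    fix x :: "real vec" assume "x \<in> carrier_vec (dim_col R)"
    hence x: "x \<in> carrier_vec n" using R by simp
    show "0 \<le> x \<bullet> (R *\<^sub>v x)"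
      unfolding R_def S_def quadratic_form_conjugate_mat_diag[OF U(1) x]
      using d by (auto intro!: sum_nonneg)
  qed
  have "sym_sqrt n M = R" unfolding sym_sqrt_def
  proof (rule the_equality)
    show "R \<in> carrier_mat n n \<and> transpose_mat R = R \<and> psd_mat R \<and> R * R = M"
      using R RT \<open>psd_mat R\<close> RR by blast
    fix R' assume "R' \<in> carrier_mat n n \<and> transpose_mat R' = R' \<and> psd_mat R' \<and> R' * R' = M"
    thus "R' = R" unfolding R_def S_def using psd_sqrt_eq_spectral[OF U(1,3) eig d] by blast
  qed
  thus "sym_sqrt n M \<in> carrier_mat n n" "transpose_mat (sym_sqrt n M) = sym_sqrt n M"
    "sym_sqrt n M * sym_sqrt n M = M" using R RT RR by simp_all
qed

lemma contraction_uniform_bound: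
  fixes A :: "real mat"
  assumes A: "A \<in> carrier_mat n n"
    and contr: "\<And>x. x \<in> carrier_vec n \<Longrightarrow> x \<noteq> 0\<^sub>v n \<Longrightarrow> (A *\<^sub>v x) \<bullet> (A *\<^sub>v x) < x \<bullet> x"
  obtains \<delta> where "0 \<le> \<delta>" "\<delta> < 1"
    "\<And>x. x \<in> carrier_vec n \<Longrightarrow> (A *\<^sub>v x) \<bullet> (A *\<^sub>v x) \<le> \<delta> * (x \<bullet> x)"
proof -
  define G where "G = transpose_mat A * A"
  have G: "G \<in> carrier_mat n n" unfolding G_def using A by simp
  have GT: "transpose_mat G = G" unfolding G_def using A by (simp add: transpose_mult[of _ n n _ n])
  obtain U d where U: "U \<in> carrier_mat n n" "transpose_mat U * U = 1\<^sub>m n" "U * transpose_mat U = 1\<^sub>m n"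
    and eig: "\<And>i. i < n \<Longrightarrow> G *\<^sub>v col U i = d i \<cdot>\<^sub>v col U i"
    and unit: "\<And>i. i < n \<Longrightarrow> col U i \<bullet> col U i = 1"
    and Gdec: "G = U * mat_diag n d * transpose_mat U"
    using real_symmetric_spectral_decomposition[OF G GT] by blast
  have Gq: "x \<bullet> (G *\<^sub>v x) = (A *\<^sub>v x) \<bullet> (A *\<^sub>v x)" if x: "x \<in> carrier_vec n" for x
  proof -
    have "G *\<^sub>v x = transpose_mat A *\<^sub>v (A *\<^sub>v x)"
      unfolding G_def using A x by (simp add: assoc_mult_mat_vec[of _ n n _ n])
    thus ?thesis using transpose_vec_mult_scalar[OF A x, of "A *\<^sub>v x"] A x
      comm_scalar_prod[of x n "transpose_mat A *\<^sub>v (A *\<^sub>v x)"] by simp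
  qed
  have d: "d i < 1" if i: "i < n" for i
  proof -
    have "col U i \<noteq> 0\<^sub>v n" using unit[OF i] by auto
    hence "(A *\<^sub>v col U i) \<bullet> (A *\<^sub>v col U i) < 1" using contr[of "col U i"] U unit[OF i] i by simp
    thus ?thesis using Gq[of "col U i"] eig[OF i] unit[OF i] U i by simp
  qed
  define \<delta> where "\<delta> = Max (insert 0 (d ` {..<n}))"
  show thesis
  proof
    show "0 \<le> \<delta>" "\<delta> < 1" unfolding \<delta>_def using d by auto
    fix x :: "real vec" assume x: "x \<in> carrier_vec n"
    have "(A *\<^sub>v x) \<bullet> (A *\<^sub>v x) = (\<Sum>i<n. d i * (col U i \<bullet> x)\<^sup>2)"
      using Gq[OF x] quadratic_form_conjugate_mat_diag[OF U(1) x] Gdec by simp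
    also have "\<dots> \<le> (\<Sum>i<n. \<delta> * (col U i \<bullet> x)\<^sup>2)"
      unfolding \<delta>_def by (intro sum_mono mult_right_mono) auto
    also have "\<dots> = \<delta> * (x \<bullet> x)"
      using orthogonal_sq_norm[OF U(1,3) x] by (simp add: sum_distrib_left)
    finally show "(A *\<^sub>v x) \<bullet> (A *\<^sub>v x) \<le> \<delta> * (x \<bullet> x)" .
  qed
qed

lemma spec_norm_less_one:
  fixes A :: "real mat"
  assumes A: "A \<in> carrier_mat n n"
    and contr: "\<And>x. x \<in> carrier_vec n \<Longrightarrow> x \<noteq> 0\<^sub>v n \<Longrightarrow> (A *\<^sub>v x) \<bullet> (A *\<^sub>v x) < x \<bullet> x"
  shows "spec_norm A < 1"
proof -
  obtain \<delta> where \<delta>: "0 \<le> \<delta>" "\<delta> < 1"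
    and bound: "\<And>x. x \<in> carrier_vec n \<Longrightarrow> (A *\<^sub>v x) \<bullet> (A *\<^sub>v x) \<le> \<delta> * (x \<bullet> x)"
    using contraction_uniform_bound[OF A contr] by blast
  have "spec_norm A \<le> sqrt \<delta>" unfolding spec_norm_def
  proof (rule cSup_least)
    show "{sqrt ((A *\<^sub>v v) \<bullet> (A *\<^sub>v v)) |v. v \<in> carrier_vec (dim_col A) \<and> v \<bullet> v \<le> 1} \<noteq> {}"
      using A by (auto intro!: exI[of _ "0\<^sub>v n"])
  next
    fix y assume "y \<in> {sqrt ((A *\<^sub>v v) \<bullet> (A *\<^sub>v v)) |v. v \<in> carrier_vec (dim_col A) \<and> v \<bullet> v \<le> 1}"
    then obtain v where v: "y = sqrt ((A *\<^sub>v v) \<bullet> (A *\<^sub>v v))" "v \<in> carrier_vec n" "v \<bullet> v \<le> 1"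
      using A by auto
    have "\<delta> * (v \<bullet> v) \<le> \<delta>" using v(3) \<delta>(1) by (simp add: mult_left_le)
    thus "y \<le> sqrt \<delta>" using bound[OF v(2)] v(1) by simp
  qed
  also have "sqrt \<delta> < 1" using \<delta> by simp
  finally show ?thesis .
qed

lemma rank_one_sweep_contraction:
  fixes r :: "nat \<Rightarrow> real vec" and c :: "nat \<Rightarrow> real"
  assumes r: "\<And>a. a < m \<Longrightarrow> r a \<in> carrier_vec n"
    and c: "\<And>a. a < m \<Longrightarrow> 0 < c a \<and> c a * (r a \<bullet> r a) < 2"
    and x: "x \<in> carrier_vec n"
    and P: "P = foldl (\<lambda>P a. (1\<^sub>m n - rank_one_mat (c a) (r a)) * P) (1\<^sub>m n) [0..<m]"
  shows "P \<in> carrier_mat n n \<and> (P *\<^sub>v x) \<bullet> (P *\<^sub>v x) \<le> x \<bullet> x \<and>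
    ((P *\<^sub>v x) \<bullet> (P *\<^sub>v x) = x \<bullet> x \<longrightarrow> P *\<^sub>v x = x \<and> (\<forall>a<m. r a \<bullet> x = 0))"
  using r c P
proof (induction m arbitrary: P)
  case 0
  then show ?case using x by simp
next
  case (Suc m)
  define Q where "Q = foldl (\<lambda>P a. (1\<^sub>m n - rank_one_mat (c a) (r a)) * P) (1\<^sub>m n) [0..<m]"
  have IH: "Q \<in> carrier_mat n n" "(Q *\<^sub>v x) \<bullet> (Q *\<^sub>v x) \<le> x \<bullet> x"
    "(Q *\<^sub>v x) \<bullet> (Q *\<^sub>v x) = x \<bullet> x \<Longrightarrow> Q *\<^sub>v x = x \<and> (\<forall>a<m. r a \<bullet> x = 0)"
    using Suc.IH[OF _ _ Q_def] Suc.prems by auto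
  define y where "y = Q *\<^sub>v x"
  have rm: "r m \<in> carrier_vec n" and cm: "0 < c m" "c m * (r m \<bullet> r m) < 2" using Suc.prems by auto
  have y: "y \<in> carrier_vec (dim_vec (r m))" unfolding y_def using IH(1) x rm by simp
  have B: "1\<^sub>m n - rank_one_mat (c m) (r m) \<in> carrier_mat n n"
    using rank_one_mat_carrier[of "c m" "r m"] rm by (intro minus_carrier_mat) auto
  have P: "P = (1\<^sub>m n - rank_one_mat (c m) (r m)) * Q" using Suc.prems(3) unfolding Q_def by simp
  have Px: "P *\<^sub>v x = (1\<^sub>m n - rank_one_mat (c m) (r m)) *\<^sub>v y"
    unfolding P y_def by (rule assoc_mult_mat_vec[OF B IH(1) x])
  have norm: "(P *\<^sub>v x) \<bullet> (P *\<^sub>v x) = y \<bullet> y - c m * (2 - c m * (r m \<bullet> r m)) * (r m \<bullet> y)\<^sup>2"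
    unfolding Px using one_minus_rank_one_mat_sq_norm[OF y] rm by simp
  have k: "0 \<le> c m * (2 - c m * (r m \<bullet> r m)) * (r m \<bullet> y)\<^sup>2" using cm by simp
  show ?case
  proof (intro conjI impI)
    show "P \<in> carrier_mat n n" unfolding P using B IH(1) by simp
    show "(P *\<^sub>v x) \<bullet> (P *\<^sub>v x) \<le> x \<bullet> x" using norm k IH(2) unfolding y_def by linarith
    assume eq: "(P *\<^sub>v x) \<bullet> (P *\<^sub>v x) = x \<bullet> x"
    hence "c m * (2 - c m * (r m \<bullet> r m)) * (r m \<bullet> y)\<^sup>2 = 0" and yy: "y \<bullet> y = x \<bullet> x"
      using norm k IH(2) unfolding y_def by linarith+
    hence ry: "r m \<bullet> y = 0" using cm by simp
    have yx: "y = x" and rest: "\<forall>a<m. r a \<bullet> x = 0" using IH(3) yy unfolding y_def by auto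
    show "P *\<^sub>v x = x"
      using Px one_minus_rank_one_mat_mult_vec[OF y] ry rm yx x by (auto intro!: eq_vecI)
    show "\<forall>a<Suc m. r a \<bullet> x = 0" using rest ry yx less_Suc_eq by auto
  qed
qed

lemma rank_one_sweep_spec_norm_less_one:
  fixes r :: "nat \<Rightarrow> real vec" and c :: "nat \<Rightarrow> real"
  assumes r: "\<And>a. a < m \<Longrightarrow> r a \<in> carrier_vec n"
    and c: "\<And>a. a < m \<Longrightarrow> 0 < c a \<and> c a * (r a \<bullet> r a) < 2"
    and span: "\<And>x. x \<in> carrier_vec n \<Longrightarrow> \<forall>a<m. r a \<bullet> x = 0 \<Longrightarrow> x = 0\<^sub>v n"
  shows "spec_norm (foldl (\<lambda>P a. (1\<^sub>m n - rank_one_mat (c a) (r a)) * P) (1\<^sub>m n) [0..<m]) < 1"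
proof -
  define P where "P = foldl (\<lambda>P a. (1\<^sub>m n - rank_one_mat (c a) (r a)) * P) (1\<^sub>m n) [0..<m]"
  have sweep: "P \<in> carrier_mat n n \<and> (P *\<^sub>v x) \<bullet> (P *\<^sub>v x) \<le> x \<bullet> x \<and>
    ((P *\<^sub>v x) \<bullet> (P *\<^sub>v x) = x \<bullet> x \<longrightarrow> P *\<^sub>v x = x \<and> (\<forall>a<m. r a \<bullet> x = 0))"
    if "x \<in> carrier_vec n" for x
    by (rule rank_one_sweep_contraction) (use r c that P_def in auto)
  have "spec_norm P < 1"
  proof (rule spec_norm_less_one)
    show "P \<in> carrier_mat n n" using sweep[of "0\<^sub>v n"] by simp
    fix x :: "real vec" assume x: "x \<in> carrier_vec n" and "x \<noteq> 0\<^sub>v n"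
    thus "(P *\<^sub>v x) \<bullet> (P *\<^sub>v x) < x \<bullet> x" using sweep[OF x] span[OF x] by fastforce
  qed
  thus ?thesis unfolding P_def .
qed

lemma psd_sqrt_sweep_spec_norm_less_one:
  fixes R M :: "real mat" and c :: "nat \<Rightarrow> real"
  assumes R: "R \<in> carrier_mat s s" "transpose_mat R = R" "R * R = M"
    and pd: "\<And>x. x \<in> carrier_vec s \<Longrightarrow> x \<noteq> 0\<^sub>v s \<Longrightarrow> 0 < x \<bullet> (M *\<^sub>v x)"
    and c: "\<And>a. a < s \<Longrightarrow> 0 < c a \<and> c a * M $$ (a, a) \<le> 1"
  shows "spec_norm (foldl (\<lambda>P a. (1\<^sub>m s - mat s s (\<lambda>(i, k). c a * R $$ (i, a) * R $$ (k, a))) * P)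
    (1\<^sub>m s) [0..<s]) < 1"
proof -
  have col_row: "col R a = row R a" if "a < s" for a
    using R that by (metis carrier_matD(1) col_transpose)
  have diag: "col R a \<bullet> col R a = M $$ (a, a)" if "a < s" for a
    using R that col_row[OF that] by auto
  have "foldl (\<lambda>P a. (1\<^sub>m s - mat s s (\<lambda>(i, k). c a * R $$ (i, a) * R $$ (k, a))) * P) (1\<^sub>m s) [0..<s]
      = foldl (\<lambda>P a. (1\<^sub>m s - rank_one_mat (c a) (col R a)) * P) (1\<^sub>m s) [0..<s]"
  proof (intro foldl_cong refl)
    fix P a assume "a \<in> set [0..<s]"
    hence "mat s s (\<lambda>(i, k). c a * R $$ (i, a) * R $$ (k, a)) = rank_one_mat (c a) (col R a)"
      using R by (auto simp: rank_one_mat_def intro!: eq_matI)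
    thus "(1\<^sub>m s - mat s s (\<lambda>(i, k). c a * R $$ (i, a) * R $$ (k, a))) * P
      = (1\<^sub>m s - rank_one_mat (c a) (col R a)) * P" by simp
  qed
  also have "spec_norm \<dots> < 1"
  proof (rule rank_one_sweep_spec_norm_less_one)
    show "col R a \<in> carrier_vec s" if "a < s" for a using R that by simp
    show "0 < c a \<and> c a * (col R a \<bullet> col R a) < 2" if "a < s" for a
      using c[OF that] diag[OF that] by simp
    fix x :: "real vec" assume x: "x \<in> carrier_vec s" and orth: "\<forall>a<s. col R a \<bullet> x = 0"
    have Rx: "R *\<^sub>v x = 0\<^sub>v s" using R orth col_row by (intro eq_vecI) auto
    have "M *\<^sub>v x = R *\<^sub>v (R *\<^sub>v x)" using R x by (metis assoc_mult_mat_vec)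
    also have "\<dots> = 0\<^sub>v s" unfolding Rx using R by (intro eq_vecI) auto
    finally have "M *\<^sub>v x = 0\<^sub>v s" .
    thus "x = 0\<^sub>v s" using pd[OF x] x by fastforce
  qed
  finally show ?thesis .
qed

unbundle vec_syntax
unbundle inner_syntax

lemma quadratic_form_axis_sum:
  fixes H :: "real^'n::finite^'n" and js :: "'n list" and x :: "real vec"
  defines "v \<equiv> (\<Sum>a<length js. (x $ a) *\<^sub>R axis (js ! a) (1::real))"
  shows "v \<bullet> (H *v v) = (\<Sum>a<length js. \<Sum>b<length js. x $ a * H $ (js ! a) $ (js ! b) * x $ b)"
proof -
  have "H *v v = (\<Sum>b<length js. x $ b *\<^sub>R (H *v axis (js ! b) 1))"
    unfolding v_def by (simp add: linear_sum[OF matrix_vector_mul_linear] matrix_vector_mult_scaleR)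
  hence "v \<bullet> (H *v v) = (\<Sum>b<length js. \<Sum>a<length js.
      x $ b * (x $ a * (axis (js ! a) 1 \<bullet> (H *v axis (js ! b) 1))))"
    unfolding v_def by (simp add: inner_sum_left inner_sum_right sum_distrib_left)
  also have "\<dots> = (\<Sum>a<length js. \<Sum>b<length js.
      x $ b * (x $ a * (axis (js ! a) 1 \<bullet> (H *v axis (js ! b) 1))))"
    by (rule sum.swap)
  also have "\<dots> = (\<Sum>a<length js. \<Sum>b<length js. x $ a * H $ (js ! a) $ (js ! b) * x $ b)"
    by (simp add: inner_axis' matrix_vector_mult_axis_nth mult_ac)
  finally show ?thesis .
qed

lemma axis_sum_nth:
  fixes js :: "'n::finite list" and x :: "real vec"
  assumes "distinct js"
  shows "b < length js \<Longrightarrow> (\<Sum>a<length js. (x $ a) *\<^sub>R axis (js ! a) (1::real)) $ (js ! b) = x $ b"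
    and "i \<notin> set js \<Longrightarrow> (\<Sum>a<length js. (x $ a) *\<^sub>R axis (js ! a) (1::real)) $ i = 0"
proof -
  assume b: "b < length js"
  have "(\<Sum>a<length js. (x $ a) *\<^sub>R axis (js ! a) (1::real)) $ (js ! b)
      = (\<Sum>a<length js. x $ a * (if b = a then 1 else 0))"
    using assms b by (auto simp: sum_component axis_def nth_eq_iff_index_eq intro!: sum.cong)
  also have "\<dots> = (\<Sum>a<length js. if a = b then x $ a else 0)" by (rule sum.cong) auto
  also have "\<dots> = x $ b" using b by simp
  finally show "(\<Sum>a<length js. (x $ a) *\<^sub>R axis (js ! a) (1::real)) $ (js ! b) = x $ b" .
next
  assume "i \<notin> set js"
  thus "(\<Sum>a<length js. (x $ a) *\<^sub>R axis (js ! a) (1::real)) $ i = 0"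
    by (auto simp: sum_component axis_def intro!: sum.neutral)
qed

lemma regularized_hessian_pos_def:
  fixes H :: "real^'n::finite^'n" and js :: "'n list" and u :: "'n \<Rightarrow> real" and x :: "real vec"
  assumes dist: "distinct js"
    and Hpd: "\<And>v. v \<noteq> 0 \<Longrightarrow> (\<forall>i. i \<notin> set js \<longrightarrow> v $ i = 0) \<Longrightarrow> 0 < v \<bullet> (H *v v)"
    and u: "\<And>j. j \<in> set js \<Longrightarrow> 0 \<le> u j"
    and x: "x \<in> carrier_vec (length js)" "x \<noteq> 0\<^sub>v (length js)"
  defines "M \<equiv> mat (length js) (length js) (\<lambda>(a, b). H $ (js ! a) $ (js ! b) + (if a = b then u (js ! a) else 0))"
  shows "0 < scalar_prod x (M *\<^sub>v x)"
proof -
  define s where "s = length js"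
  define v where "v = (\<Sum>a<s. (x $ a) *\<^sub>R axis (js ! a) (1::real))"
  obtain b where b: "b < s" "x $ b \<noteq> 0" using x unfolding s_def by (metis carrier_vecD eq_vecI index_zero_vec(1,2))
  have "v $ (js ! b) = x $ b" using axis_sum_nth(1)[OF dist, of b x] b(1) unfolding v_def s_def by simp
  hence "v \<noteq> 0" using b(2) by auto
  moreover have "\<forall>i. i \<notin> set js \<longrightarrow> v $ i = 0" using axis_sum_nth(2)[OF dist] unfolding v_def s_def by blast
  ultimately have Hv: "0 < v \<bullet> (H *v v)" by (rule Hpd)
  have row: "(\<Sum>b<s. x $ a * M $$ (a, b) * x $ b)
      = (\<Sum>b<s. x $ a * H $ (js ! a) $ (js ! b) * x $ b) + u (js ! a) * (x $ a)\<^sup>2" if "a < s" for a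
  proof -
    have "(\<Sum>b<s. x $ a * M $$ (a, b) * x $ b)
        = (\<Sum>b<s. x $ a * H $ (js ! a) $ (js ! b) * x $ b + (if b = a then u (js ! a) * (x $ a)\<^sup>2 else 0))"
      using that by (intro sum.cong) (auto simp: M_def s_def algebra_simps power2_eq_square)
    thus ?thesis using that by (simp add: sum.distrib)
  qed
  have "scalar_prod x (M *\<^sub>v x) = (\<Sum>a<s. \<Sum>b<s. x $ a * M $$ (a, b) * x $ b)"
    using x unfolding M_def s_def by (simp add: scalar_prod_def sum_distrib_left lessThan_atLeast0 mult.assoc)
  also have "\<dots> = (\<Sum>a<s. (\<Sum>b<s. x $ a * H $ (js ! a) $ (js ! b) * x $ b) + u (js ! a) * (x $ a)\<^sup>2)"
    by (rule sum.cong) (simp_all add: row)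
  also have "\<dots> = v \<bullet> (H *v v) + (\<Sum>a<s. u (js ! a) * (x $ a)\<^sup>2)"
    unfolding sum.distrib v_def s_def quadratic_form_axis_sum ..
  finally show ?thesis using Hv u unfolding s_def by (smt (verit) nth_mem sum_nonneg lessThan_iff zero_le_power2 mult_nonneg_nonneg)
qed

lemma scaled_regularized_diagonal_le_one:
  fixes \<gamma> p h :: real
  assumes "0 < \<gamma>" "0 < p" "p \<le> 1" "\<gamma> * h \<le> 1"
  shows "0 \<le> 1 / (\<gamma> * p) - 1 / \<gamma>" and "\<gamma> * p * (h + (1 / (\<gamma> * p) - 1 / \<gamma>)) \<le> 1"
proof -
  show "0 \<le> 1 / (\<gamma> * p) - 1 / \<gamma>" using assms by (simp add: field_simps)
  have "\<gamma> * p * (h + (1 / (\<gamma> * p) - 1 / \<gamma>)) = 1 - p * (1 - \<gamma> * h)"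
    using assms by (simp add: field_simps)
  also have "\<dots> \<le> 1" using assms by simp
  finally show "\<gamma> * p * (h + (1 / (\<gamma> * p) - 1 / \<gamma>)) \<le> 1" .
qed

lemma coordinate_sweep_spec_norm_less_one:
  fixes H :: "real^'n::finite^'n" and c u :: "'n \<Rightarrow> real" and js :: "'n list"
  assumes dist: "distinct js"
    and Hsym: "\<And>i k. H $ i $ k = H $ k $ i"
    and Hpd: "\<And>v. v \<noteq> 0 \<Longrightarrow> (\<forall>i. i \<notin> set js \<longrightarrow> v $ i = 0) \<Longrightarrow> 0 < v \<bullet> (H *v v)"
    and c: "\<And>j. j \<in> set js \<Longrightarrow> 0 < c j \<and> c j * (H $ j $ j + u j) \<le> 1"
    and u: "\<And>j. j \<in> set js \<Longrightarrow> 0 \<le> u j"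
  defines "s \<equiv> length js"
  defines "M \<equiv> mat s s (\<lambda>(a, b). H $ (js ! a) $ (js ! b) + (if a = b then u (js ! a) else 0))"
  shows "spec_norm (foldl (\<lambda>P a. (1\<^sub>m s - mat s s (\<lambda>(i, k).
      c (js ! a) * sym_sqrt s M $$ (i, a) * sym_sqrt s M $$ (k, a))) * P) (1\<^sub>m s) [0..<s]) < 1"
proof (rule psd_sqrt_sweep_spec_norm_less_one)
  have M: "M \<in> carrier_mat s s" unfolding M_def by simp
  have MT: "transpose_mat M = M" unfolding M_def using Hsym by (auto intro!: eq_matI)
  show pd: "0 < scalar_prod x (M *\<^sub>v x)" if "x \<in> carrier_vec s" "x \<noteq> 0\<^sub>v s" for x
    using regularized_hessian_pos_def[OF dist, of H u x] Hpd u that unfolding M_def s_def by blast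
  have "0 \<le> scalar_prod x (M *\<^sub>v x)" if "x \<in> carrier_vec s" for x
    using pd[OF that] M that by (cases "x = 0\<^sub>v s") auto
  from sym_sqrt_properties[OF M MT this]
  show "sym_sqrt s M \<in> carrier_mat s s" "transpose_mat (sym_sqrt s M) = sym_sqrt s M"
    "sym_sqrt s M * sym_sqrt s M = M" by auto
  show "0 < c (js ! a) \<and> c (js ! a) * M $$ (a, a) \<le> 1" if "a < s" for a
    using c[of "js ! a"] that unfolding M_def s_def by simp
qed

theorem lemma8:
  fixes f :: "real^('n::{finite,linorder}) \<Rightarrow> real"
    and grad :: "real^('n::{finite,linorder}) \<Rightarrow> real^('n::{finite,linorder})"
    and hess :: "real^('n::{finite,linorder}) \<Rightarrow> real^('n::{finite,linorder})^('n::{finite,linorder})"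
    and g :: "('n::{finite,linorder}) \<Rightarrow> real \<Rightarrow> ereal"
    and xs :: "real^('n::{finite,linorder})"
    and \<gamma> :: "('n::{finite,linorder}) \<Rightarrow> real"
  assumes f_convex: "convex_on UNIV f"
    and f_grad: "\<And>x. (f has_derivative (\<lambda>h. grad x \<bullet> h)) (at x)"
    and grad_lip: "\<exists>L. L-lipschitz_on UNIV grad"
    and g_proper: "\<And>j. proper_fun (g j)"
    and g_closed: "\<And>j. closed_fun (g j)"
    and g_convex: "\<And>j. convex_fun (g j)"
    and xs_min: "\<And>x. ereal (f xs) + (\<Sum>j\<in>UNIV. g j (xs $ j)) \<le> ereal (f x) + (\<Sum>j\<in>UNIV. g j (x $ j))"
    and g_C2: "\<And>j. j \<in> {j. \<exists>v. subdiff (g j) (xs $ j) = {v}} \<Longrightarrow> C2_near (g j) (xs $ j)"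
    and f_C2: "\<exists>e>0. continuous_on (ball xs e) hess \<and>
                 (\<forall>y\<in>ball xs e. (grad has_derivative (\<lambda>h. hess y *v h)) (at y))"
    and hess_pd: "\<And>v. v \<noteq> 0 \<Longrightarrow> (\<forall>i. i \<notin> {j. \<exists>v. subdiff (g j) (xs $ j) = {v}} \<longrightarrow> v $ i = 0)
                     \<Longrightarrow> 0 < v \<bullet> (hess xs *v v)"
    and step: "\<And>j. 0 < \<gamma> j \<and> \<gamma> j * coord_lip grad j \<le> 1"
  shows
    "let S = {j. \<exists>v. subdiff (g j) (xs $ j) = {v}};
         js = sorted_list_of_set S;
         s = length js;
         z = (\<lambda>j. xs $ j - \<gamma> j * grad xs $ j);
         p = (\<lambda>j. deriv (prox (\<gamma> j) (g j)) (z j));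
         u = (\<lambda>j. 1 / (\<gamma> j * p j) - 1 / \<gamma> j);
         M = mat s s (\<lambda>(a, b). hess xs $ (js ! a) $ (js ! b)
                               + (if a = b then u (js ! a) else 0));
         R = sym_sqrt s M;
         B = (\<lambda>a. mat s s (\<lambda>(i, k). \<gamma> (js ! a) * p (js ! a) * (R $$ (i, a)) * (R $$ (k, a))));
         A = foldl (\<lambda>P a. (1\<^sub>m s - B a) * P) (1\<^sub>m s) [0..<s]
     in spec_norm A < 1"
proof -
  define S where "S = {j. \<exists>v. subdiff (g j) (xs $ j) = {v}}"
  define p where "p j = deriv (prox (\<gamma> j) (g j)) (xs $ j - \<gamma> j * grad xs $ j)" for j
  obtain e where "0 < e" "\<forall>y\<in>ball xs e. (grad has_derivative (\<lambda>h. hess y *v h)) (at y)"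
    using f_C2 by blast
  hence hess: "(grad has_derivative (\<lambda>h. hess xs *v h)) (at xs)" by simp
  have p: "0 < p j \<and> p j \<le> 1" if "j \<in> S" for j
    using prox_derivative_at_solution[OF f_grad g_proper g_convex xs_min g_C2] step that
    unfolding p_def S_def by blast
  have diag: "\<gamma> j * hess xs $ j $ j \<le> 1" for j
    using mult_left_mono[OF hessian_diag_le_coord_lip[OF hess grad_lip, of j], of "\<gamma> j"] step[of j]
    by (smt (verit))
  show ?thesis unfolding Let_def p_def[symmetric] S_def[symmetric]
  proof (rule coordinate_sweep_spec_norm_less_one[where c = "\<lambda>j. \<gamma> j * p j"
        and u = "\<lambda>j. 1 / (\<gamma> j * p j) - 1 / \<gamma> j"])
    show "distinct (sorted_list_of_set S)" by simp
    show "hess xs $ i $ k = hess xs $ k $ i" for i k by (rule hessian_symmetric[OF f_grad hess])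
    show "0 < v \<bullet> (hess xs *v v)" if "v \<noteq> 0" "\<forall>i. i \<notin> set (sorted_list_of_set S) \<longrightarrow> v $ i = 0" for v
      using hess_pd that unfolding S_def by simp
    fix j assume "j \<in> set (sorted_list_of_set S)"
    hence j: "0 < \<gamma> j" "0 < p j" "p j \<le> 1" "\<gamma> j * hess xs $ j $ j \<le> 1" using p step diag by auto
    thus "0 \<le> 1 / (\<gamma> j * p j) - 1 / \<gamma> j"
      "0 < \<gamma> j * p j \<and> \<gamma> j * p j * (hess xs $ j $ j + (1 / (\<gamma> j * p j) - 1 / \<gamma> j)) \<le> 1"
      using scaled_regularized_diagonal_le_one[OF j] by auto
  qed
qed

end
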